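(* Let $F$ be an absolutely continuous distribution function on $\mathbb{R}$ with density $f$, $0<\int(f'/f)^2dF<\infty$, $\psi_f=f'/f$, $h(y)=(1,\psi_f(y))^T$, and $\Gamma_t=\int_{z\ge y}h(z)h^T(z)dF(z)$, $t=F(y)$, assumed nonsingular for every $0\le t<1$. For $\varphi\in L_2(\mathbb{R},F)$ define $$\mathcal{L}\varphi(y)=\varphi(y)-\int_{z\le y}\varphi(z)h^T(z)\Gamma_{F(z)}^{-1}dF(z)\,h(y),\quad y\in\mathbb{R}.$$ Let $\mathcal{H}=\{\varphi\in L_2(\mathbb{R},F):\int\varphi h\,dF=0\}$. Then $\mathcal{L}$ is a norm-preserving transformation from $L_2(\mathbb{R},F)$ into $\mathcal{H}$: $\mathcal{L}\varphi\perp h$ and $\int(\mathcal{L}\varphi)^2dF=\int\varphi^2dF$. Consequently the process $w(\alpha)=\hat\xi(\gamma,\mathcal{L}\varphi)$, $\alpha=\gamma\varphi$, $\gamma\in L_2(\mathbb{R}^p,H)$, $\varphi\in L_2(\mathbb{R},F)$, is a function-parametric Brownian motion, i.e., a zero-mean Gaussian process with $Ew(\alpha_1)w(\alpha_2)=\langle\alpha_1,\alpha_2\rangle$.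
   Context: $H$ is a distribution function on $\mathbb{R}^p$; $\mathbb{L}=L_2(\mathbb{R}^{p+1},H\times F)$ with $\langle\alpha,\beta\rangle=\int\alpha\beta\,d(H\times F)$ (coordinatewise for vectors). $\dot\mu_\theta:\mathbb{R}^p\to\mathbb{R}^q$ has coordinates in $L_2(H)$ with $\int\dot\mu_\theta\dot\mu_\theta^TdH$ positive definite; $m_\theta(x,y)=\dot\mu_\theta(x)\psi_f(y)$. $b$ is the zero-mean Gaussian process indexed by $\mathbb{L}$, linear in its argument, with $Eb(\alpha_1)b(\alpha_2)=\langle\alpha_1,\alpha_2\rangle$; for $\alpha=\gamma\varphi$ write $b(\gamma,\varphi)=b(\alpha)$. $\alpha^1(x,y)=\alpha(x,y)-\int\alpha(x,y')dF(y')$, and $\hat\xi(\alpha)=\hat\xi(\gamma,\varphi)=b(\alpha^1)-\langle\alpha,m_\theta^T\rangle\langle m_\theta,m_\theta^T\rangle^{-1}b(m_\theta)$. *)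

theory Defs
  imports "HOL-Probability.Probability"
begin

definition L2set :: "'a measure \<Rightarrow> ('a \<Rightarrow> real) set" where
  "L2set M = {g. g \<in> borel_measurable M \<and> integrable M (\<lambda>x. (g x)^2)}"

definition ip :: "'a measure \<Rightarrow> ('a \<Rightarrow> real) \<Rightarrow> ('a \<Rightarrow> real) \<Rightarrow> real" where
  "ip M \<alpha> \<beta> = (LINT z|M. \<alpha> z * \<beta> z)"

definition distF :: "(real \<Rightarrow> real) \<Rightarrow> real measure" where
  "distF f = density lborel (\<lambda>x. ennreal (f x))"

text \<open>psi_f = f'/f, where f' is the derivative of the absolutely continuous density f.\<close>
definition psi :: "(real \<Rightarrow> real) \<Rightarrow> (real \<Rightarrow> real) \<Rightarrow> real \<Rightarrow> real" where
  "psi f f' y = f' y / f y"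

definition hvec :: "(real \<Rightarrow> real) \<Rightarrow> (real \<Rightarrow> real) \<Rightarrow> real \<Rightarrow> real^2" where
  "hvec f f' y = vector [1, psi f f' y]"

definition outer :: "real^'n \<Rightarrow> real^'n^'n" where
  "outer v = (\<chi> i j. v$i * v$j)"

text \<open>Gamma_t with t = F(y): integral of h h^T over {z >= y} w.r.t. dF.\<close>
definition Gam :: "(real \<Rightarrow> real) \<Rightarrow> (real \<Rightarrow> real) \<Rightarrow> real \<Rightarrow> real^2^2" where
  "Gam f f' y = (LINT z:{y..}|distF f. outer (hvec f f' z))"

definition Lop :: "(real \<Rightarrow> real) \<Rightarrow> (real \<Rightarrow> real) \<Rightarrow> (real \<Rightarrow> real) \<Rightarrow> real \<Rightarrow> real" where
  "Lop f f' \<phi> y = \<phi> y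
     - (LINT z:{..y}|distF f. \<phi> z *\<^sub>R (hvec f f' z v* matrix_inv (Gam f f' z))) \<bullet> hvec f f' y"

definition centered_normal :: "'w measure \<Rightarrow> ('w \<Rightarrow> real) \<Rightarrow> real \<Rightarrow> bool" where
  "centered_normal P X v \<longleftrightarrow>
     (v = 0 \<and> (AE \<omega> in P. X \<omega> = 0)) \<or>
     (v > 0 \<and> distributed P lborel X (normal_density 0 (sqrt v)))"

text \<open>Zero-mean Gaussian process indexed by I: random variables whose finite linear
  combinations are all centered normal (i.e. all finite-dimensional distributions are
  centered jointly Gaussian).\<close>
definition zero_mean_gaussian :: "'w measure \<Rightarrow> 'i set \<Rightarrow> ('i \<Rightarrow> 'w \<Rightarrow> real) \<Rightarrow> bool" where
  "zero_mean_gaussian P I X \<longleftrightarrow>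
     (\<forall>i\<in>I. X i \<in> borel_measurable P) \<and>
     (\<forall>xs cs. set xs \<subseteq> I \<longrightarrow> length cs = length xs \<longrightarrow>
        (\<exists>v. centered_normal P (\<lambda>\<omega>. \<Sum>k<length xs. cs!k * X (xs!k) \<omega>) v))"

definition mfun :: "('a \<Rightarrow> real^'q) \<Rightarrow> (real \<Rightarrow> real) \<Rightarrow> 'q \<Rightarrow> ('a \<times> real \<Rightarrow> real)" where
  "mfun mu ps j = (\<lambda>(x, y). mu x $ j * ps y)"

definition alpha1 :: "real measure \<Rightarrow> ('a \<times> real \<Rightarrow> real) \<Rightarrow> ('a \<times> real \<Rightarrow> real)" where
  "alpha1 MF \<alpha> = (\<lambda>(x, y). \<alpha> (x, y) - (LINT y'|MF. \<alpha> (x, y')))"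

definition xi_hat :: "('a \<times> real) measure \<Rightarrow> real measure \<Rightarrow> ('q::finite \<Rightarrow> ('a \<times> real \<Rightarrow> real))
     \<Rightarrow> (('a \<times> real \<Rightarrow> real) \<Rightarrow> 'w \<Rightarrow> real) \<Rightarrow> ('a \<times> real \<Rightarrow> real) \<Rightarrow> 'w \<Rightarrow> real" where
  "xi_hat HF MF m b \<alpha> \<omega> =
     b (alpha1 MF \<alpha>) \<omega>
     - (((\<chi> j. ip HF \<alpha> (m j)) :: real^'q) v* matrix_inv (\<chi> i j. ip HF (m i) (m j)))
         \<bullet> (\<chi> j. b (m j) \<omega>)"

end

(* Write Gam(y) for the 2x2 matrix of tail moments of h = (1, psi_f) and u(y) for the integral of
   phi h^T Gam^-1 dF over (-inf, y], so that L phi = phi - u.h.  Exchanging the order of integration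
   over {s <= z <= b} gives, for every b with F(b) < 1,
     int_{z <= b} (L phi) h dF = Gam(b) u(b),
     int_{z <= b} (L phi)^2 dF = int_{z <= b} phi^2 dF - u(b)^T Gam(b) u(b).
   The quadratic form u(b)^T Gam(b) u(b) tends to 0 as F(b) -> 1: split phi at a point y0 beyond which
   phi has small L2 mass; the part beyond y0 is controlled by the second identity, the part before y0
   by Gam(b) -> 0.  Monotone convergence then gives the isometry, and |Gam(b) u(b)|^2 <= C u(b)^T Gam(b) u(b)
   gives orthogonality to h; polarization gives preservation of inner products.  As L phi is centred and
   orthogonal to psi_f, both correction terms of xi_hat vanish on gamma (x) L phi, so w is b composed
   with an isometry into L_2(H x F) and inherits Gaussianity and the Brownian covariance. *)

theory Submission
  imports Defs
begin

lemma matrix_inv_unique: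
  fixes A B :: "real^'n^'n"
  assumes "A ** B = mat 1" "B ** A = mat 1"
  shows "matrix_inv A = B"
proof -
  let ?C = "matrix_inv A"
  have C: "A ** ?C = mat 1 \<and> ?C ** A = mat 1"
    unfolding matrix_inv_def using someI_ex[of "\<lambda>A'. A ** A' = mat 1 \<and> A' ** A = mat 1"] assms by blast
  have "?C = ?C ** (A ** B)" using assms by (simp add: matrix_mul_rid)
  also have "\<dots> = (?C ** A) ** B" by (simp add: matrix_mul_assoc)
  also have "\<dots> = B" using C by (simp add: matrix_mul_lid)
  finally show ?thesis .
qed

lemma matrix_inv_2x2:
  fixes A :: "real^2^2"
  assumes "det A \<noteq> 0"
  shows "matrix_inv A $ 1 $ 1 = A $ 2 $ 2 / det A" "matrix_inv A $ 1 $ 2 = - A $ 1 $ 2 / det A"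
    "matrix_inv A $ 2 $ 1 = - A $ 2 $ 1 / det A" "matrix_inv A $ 2 $ 2 = A $ 1 $ 1 / det A"
proof -
  obtain a b c d where abcd: "A$1$1 = a" "A$1$2 = b" "A$2$1 = c" "A$2$2 = d" by blast
  have det: "det A = a*d - b*c" by (simp add: det_2 abcd)
  define B :: "real^2^2" where
    "B = (\<chi> i j. if i = 1 then (if j = 1 then d / (a*d - b*c) else - b / (a*d - b*c))
                  else (if j = 1 then - c / (a*d - b*c) else a / (a*d - b*c)))"
  have "matrix_inv A = B"
  proof (rule matrix_inv_unique)
    show "A ** B = mat 1" "B ** A = mat 1" using assms unfolding det
      by (simp_all add: abcd B_def matrix_matrix_mult_def vec_eq_iff forall_2 sum_2 mat_def
          diff_divide_distrib[symmetric] add_divide_distrib[symmetric] right_diff_distrib mult.commute)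
  qed
  then show "matrix_inv A $ 1 $ 1 = A $ 2 $ 2 / det A" "matrix_inv A $ 1 $ 2 = - A $ 1 $ 2 / det A"
    "matrix_inv A $ 2 $ 1 = - A $ 2 $ 1 / det A" "matrix_inv A $ 2 $ 2 = A $ 1 $ 1 / det A"
    by (simp_all add: B_def abcd det)
qed

definition quad2 :: "real \<Rightarrow> real \<Rightarrow> real \<Rightarrow> real \<Rightarrow> real \<Rightarrow> real" where
  "quad2 a c d x y = a * x^2 + 2 * c * x * y + d * y^2"

lemma quad2_nonneg:
  assumes "0 \<le> a" "0 \<le> d" "c^2 \<le> a * d"
  shows "0 \<le> quad2 a c d x y"
proof (cases "a = 0")
  case True
  then show ?thesis using assms by (simp add: quad2_def)
next
  case False
  have "a * quad2 a c d x y = (a*x + c*y)^2 + (a*d - c^2) * y^2"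
    by (simp add: quad2_def power2_eq_square algebra_simps)
  also have "\<dots> \<ge> 0" using assms by simp
  finally show ?thesis using False assms by (simp add: zero_le_mult_iff)
qed

lemma quad2_add_le:
  assumes "0 \<le> a" "0 \<le> d" "c^2 \<le> a * d"
  shows "quad2 a c d (x + x') (y + y') \<le> 2 * quad2 a c d x y + 2 * quad2 a c d x' y'"
proof -
  have "2 * quad2 a c d x y + 2 * quad2 a c d x' y' - quad2 a c d (x + x') (y + y')
      = quad2 a c d (x - x') (y - y')"
    by (simp add: quad2_def power2_eq_square algebra_simps)
  then show ?thesis using quad2_nonneg[OF assms, of "x - x'" "y - y'"] by simp
qed

lemma quad2_row1_le:
  assumes "c^2 \<le> a * d"
  shows "(a * x + c * y)^2 \<le> a * quad2 a c d x y"
proof -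
  have "a * quad2 a c d x y - (a * x + c * y)^2 = (a * d - c^2) * y^2"
    by (simp add: quad2_def power2_eq_square algebra_simps)
  then show ?thesis using assms by (smt (verit) zero_le_power2 mult_nonneg_nonneg)
qed

lemma quad2_row2_le:
  assumes "c^2 \<le> a * d"
  shows "(c * x + d * y)^2 \<le> d * quad2 a c d x y"
proof -
  have "d * quad2 a c d x y - (c * x + d * y)^2 = (a * d - c^2) * x^2"
    by (simp add: quad2_def power2_eq_square algebra_simps)
  then show ?thesis using assms by (smt (verit) zero_le_power2 mult_nonneg_nonneg)
qed

lemma psd2_det_le_det_add:
  fixes a c d \<alpha> \<gamma> \<delta> :: real
  assumes "0 \<le> a" "0 \<le> d" "0 \<le> \<alpha>" "0 \<le> \<delta>" "c^2 \<le> a*d" "\<gamma>^2 \<le> \<alpha>*\<delta>"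
  shows "a*d - c^2 \<le> (a+\<alpha>)*(d+\<delta>) - (c+\<gamma>)^2"
proof -
  have "(c*\<gamma>)^2 \<le> (a*d)*(\<alpha>*\<delta>)"
    unfolding power_mult_distrib by (rule mult_mono) (use assms in auto)
  also have "4*((a*d)*(\<alpha>*\<delta>)) \<le> (a*\<delta> + \<alpha>*d)^2"
    using zero_le_power2[of "a*\<delta> - \<alpha>*d"] by (simp add: power2_eq_square algebra_simps)
  finally have "\<bar>2*(c*\<gamma>)\<bar> \<le> \<bar>a*\<delta> + \<alpha>*d\<bar>"
    by (simp add: abs_le_square_iff power_mult_distrib)
  then have "2*(c*\<gamma>) \<le> a*\<delta> + \<alpha>*d" using assms by simp
  then show ?thesis using assms(6) by (simp add: power2_eq_square algebra_simps)
qed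

lemma nonneg_quadratic_discriminant:
  fixes A B C :: real
  assumes "\<And>t. 0 \<le> C - 2*t*B + t^2*A" "0 \<le> A"
  shows "B^2 \<le> A*C"
proof (cases "A = 0")
  case True
  show ?thesis
  proof (cases "B = 0")
    case False
    have "0 \<le> C - 2*((C+1)/(2*B))*B" using assms(1)[of "(C+1)/(2*B)"] True by simp
    then show ?thesis using False by (simp add: field_simps)
  qed (use assms True in auto)
next
  case False
  then have A: "A > 0" using assms by simp
  have "0 \<le> C - 2*(B/A)*B + (B/A)^2*A" by (rule assms(1))
  also have "\<dots> = C - B^2/A" using A by (simp add: power2_eq_square field_simps)
  finally show ?thesis using A by (simp add: field_simps mult.commute)
qed

lemma tendsto_0_of_square_le:
  fixes X E :: "nat \<Rightarrow> real"
  assumes "\<And>n. (X n)^2 \<le> C * E n" and "E \<longlonglongrightarrow> 0"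
  shows "X \<longlonglongrightarrow> 0"
proof (rule Lim_null_comparison)
  show "(\<lambda>n. sqrt (C * E n)) \<longlonglongrightarrow> 0"
    using tendsto_real_sqrt[OF tendsto_mult_right_zero[OF assms(2), of C]] by simp
  show "eventually (\<lambda>n. norm (X n) \<le> sqrt (C * E n)) sequentially"
    using assms(1) by (intro always_eventually allI) (simp add: real_le_rsqrt)
qed

section \<open>Square-integrable functions\<close>

lemma (in finite_measure) L2set_integrable: "g \<in> L2set M \<Longrightarrow> integrable M g"
  for g :: "'a \<Rightarrow> real"
  unfolding L2set_def by (auto intro: square_integrable_imp_integrable)

lemma L2set_integrable_mult:
  fixes g k :: "'a \<Rightarrow> real"
  assumes "g \<in> L2set M" "k \<in> L2set M"
  shows "integrable M (\<lambda>x. g x * k x)"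
proof (rule Bochner_Integration.integrable_bound[where f="\<lambda>x. (g x)^2 + (k x)^2"])
  show "integrable M (\<lambda>x. (g x)^2 + (k x)^2)" "(\<lambda>x. g x * k x) \<in> borel_measurable M"
    using assms by (auto simp: L2set_def)
  have "\<bar>g x * k x\<bar> \<le> (g x)^2 + (k x)^2" for x
  proof -
    have "2 * (\<bar>g x\<bar> * \<bar>k x\<bar>) \<le> (g x)^2 + (k x)^2"
      using zero_le_power2[of "\<bar>g x\<bar> - \<bar>k x\<bar>"] by (simp add: power2_eq_square algebra_simps)
    moreover have "0 \<le> \<bar>g x\<bar> * \<bar>k x\<bar>" by simp
    ultimately show ?thesis unfolding abs_mult by linarith
  qed
  then show "AE x in M. norm (g x * k x) \<le> norm ((g x)^2 + (k x)^2)" by simp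
qed

lemma integrable_indicator_times:
  fixes g :: "'a \<Rightarrow> real"
  shows "A \<in> sets M \<Longrightarrow> integrable M g \<Longrightarrow> integrable M (\<lambda>x. indicator A x * g x)"
  using integrable_mult_indicator[of A M g] by simp

lemma integrable_bounded_mult:
  fixes g h :: "'a \<Rightarrow> real"
  assumes "integrable M g" "h \<in> borel_measurable M" "\<And>x. \<bar>h x\<bar> \<le> C"
  shows "integrable M (\<lambda>x. h x * g x)"
proof (rule Bochner_Integration.integrable_bound[where f="\<lambda>x. C * \<bar>g x\<bar>"])
  show "integrable M (\<lambda>x. C * \<bar>g x\<bar>)" "(\<lambda>x. h x * g x) \<in> borel_measurable M"
    using assms by auto
  have "\<bar>h x * g x\<bar> \<le> \<bar>C * \<bar>g x\<bar>\<bar>" for x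
    using assms(3)[of x] by (simp add: abs_mult mult_right_mono)
  then show "AE x in M. norm (h x * g x) \<le> norm (C * \<bar>g x\<bar>)" by simp
qed

lemma L2set_bounded_mult:
  fixes g h :: "'a \<Rightarrow> real"
  assumes "g \<in> L2set M" "h \<in> borel_measurable M" "\<And>x. \<bar>h x\<bar> \<le> C"
  shows "(\<lambda>x. h x * g x) \<in> L2set M"
proof -
  have "\<bar>(h x)^2\<bar> \<le> C^2" for x
  proof -
    have "\<bar>h x\<bar>^2 \<le> C^2" by (rule power_mono) (use assms(3)[of x] in auto)
    then show ?thesis by simp
  qed
  then have "integrable M (\<lambda>x. (h x)^2 * (g x)^2)"
    using assms by (intro integrable_bounded_mult) (auto simp: L2set_def)
  then show ?thesis using assms by (simp add: L2set_def power_mult_distrib borel_measurable_times)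
qed

lemma L2set_add:
  fixes g k :: "'a \<Rightarrow> real"
  assumes "g \<in> L2set M" "k \<in> L2set M"
  shows "(\<lambda>x. g x + k x) \<in> L2set M"
proof -
  have "integrable M (\<lambda>x. (g x)^2 + (k x)^2 + 2 * (g x * k x))"
    using assms L2set_integrable_mult[OF assms] by (auto simp: L2set_def)
  then show ?thesis using assms by (simp add: L2set_def power2_sum mult.assoc borel_measurable_add)
qed

lemma L2set_diff:
  fixes g k :: "'a \<Rightarrow> real"
  assumes "g \<in> L2set M" "k \<in> L2set M"
  shows "(\<lambda>x. g x - k x) \<in> L2set M"
  using L2set_add[OF assms(1) L2set_bounded_mult[OF assms(2), of "\<lambda>_. -1" 1]] by simp

lemma integral_square_add:
  fixes g k :: "'a \<Rightarrow> real"
  assumes "g \<in> L2set M" "k \<in> L2set M"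
  shows "(LINT x|M. (g x + k x)^2) = (LINT x|M. (g x)^2) + 2 * (LINT x|M. g x * k x) + (LINT x|M. (k x)^2)"
  using assms L2set_integrable_mult[OF assms] by (simp add: L2set_def power2_sum mult.assoc)

lemma (in finite_measure) L2set_bounded:
  fixes h :: "'a \<Rightarrow> real"
  assumes "h \<in> borel_measurable M" "\<And>x. \<bar>h x\<bar> \<le> C"
  shows "h \<in> L2set M"
  using L2set_bounded_mult[of "\<lambda>_. 1" M h C] assms by (simp add: L2set_def)

lemma abs_set_integral_le_integral_abs:
  fixes g :: "'a \<Rightarrow> real"
  assumes "integrable M g" "S \<in> sets M"
  shows "\<bar>LINT x|M. indicator S x * g x\<bar> \<le> (LINT x|M. \<bar>g x\<bar>)"
proof -
  have "\<bar>LINT x|M. indicator S x * g x\<bar> \<le> (LINT x|M. \<bar>indicator S x * g x\<bar>)"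
    by (rule integral_abs_bound)
  also have "\<dots> \<le> (LINT x|M. \<bar>g x\<bar>)"
    using assms integrable_real_mult_indicator[OF assms(2,1)]
    by (intro integral_mono) (auto simp: indicator_def mult.commute)
  finally show ?thesis .
qed

lemma (in finite_measure) square_set_integral_le:
  fixes g :: "'a \<Rightarrow> real"
  assumes g: "g \<in> L2set M" and S: "S \<in> sets M"
  shows "(LINT x|M. indicator S x * g x)^2 \<le> measure M S * (LINT x|M. indicator S x * (g x)^2)"
proof (rule nonneg_quadratic_discriminant)
  fix t :: real
  have i1: "integrable M (\<lambda>x. indicator S x * g x)" "integrable M (\<lambda>x. indicator S x * (g x)^2)"
    using integrable_mult_indicator[OF S L2set_integrable[OF g]]
      integrable_mult_indicator[OF S, of "\<lambda>x. (g x)^2"] g by (auto simp: L2set_def)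
  have "(\<lambda>x. indicator S x * (g x - t)^2)
      = (\<lambda>x. indicator S x * (g x)^2 - 2*t * (indicator S x * g x) + t^2 * indicator S x)"
    by (auto simp: fun_eq_iff power2_diff algebra_simps)
  moreover have "integrable M (\<lambda>x. t^2 * indicator S x)" "(LINT x|M. t^2 * indicator S x) = t^2 * measure M S"
    using S by (simp_all add: sets.Int_space_eq2 integrable_real_indicator emeasure_eq_measure)
  ultimately have "(LINT x|M. indicator S x * (g x - t)^2)
      = (LINT x|M. indicator S x * (g x)^2) - 2*t*(LINT x|M. indicator S x * g x) + t^2 * measure M S"
    using i1 by simp
  moreover have "0 \<le> (LINT x|M. indicator S x * (g x - t)^2)" by (intro integral_nonneg_AE) auto
  ultimately show "0 \<le> (LINT x|M. indicator S x * (g x)^2) - 2*t*(LINT x|M. indicator S x * g x)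
      + t^2 * measure M S" by simp
qed simp

lemma (in pair_sigma_finite) integrable_tensor:
  fixes g :: "'a \<Rightarrow> real" and k :: "'b \<Rightarrow> real"
  assumes g: "integrable M1 g" and k: "integrable M2 k"
  shows "integrable (M1 \<Otimes>\<^sub>M M2) (\<lambda>(x, y). g x * k y)"
proof (rule Fubini_integrable)
  note [measurable] = borel_measurable_integrable[OF g] borel_measurable_integrable[OF k]
  show "(\<lambda>(x, y). g x * k y) \<in> borel_measurable (M1 \<Otimes>\<^sub>M M2)" by measurable
  have "integrable M1 (\<lambda>x. \<bar>g x\<bar> * (LINT y|M2. \<bar>k y\<bar>))" using g by simp
  then show "integrable M1 (\<lambda>x. LINT y|M2. norm (case (x, y) of (x, y) \<Rightarrow> g x * k y))"
    by (simp add: abs_mult)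
  show "AE x in M1. integrable M2 (\<lambda>y. case (x, y) of (x, y) \<Rightarrow> g x * k y)"
    using k by simp
qed

lemma (in pair_sigma_finite) integral_tensor:
  fixes g :: "'a \<Rightarrow> real" and k :: "'b \<Rightarrow> real"
  assumes "integrable M1 g" "integrable M2 k"
  shows "integral\<^sup>L (M1 \<Otimes>\<^sub>M M2) (\<lambda>(x, y). g x * k y) = (LINT x|M1. g x) * (LINT y|M2. k y)"
  using integral_fst'[OF integrable_tensor[OF assms]] by simp

lemma (in pair_sigma_finite) ip_tensor:
  fixes g1 g2 :: "'a \<Rightarrow> real" and k1 k2 :: "'b \<Rightarrow> real"
  assumes "integrable M1 (\<lambda>x. g1 x * g2 x)" "integrable M2 (\<lambda>y. k1 y * k2 y)"
  shows "ip (M1 \<Otimes>\<^sub>M M2) (\<lambda>(x, y). g1 x * k1 y) (\<lambda>(x, y). g2 x * k2 y) = ip M1 g1 g2 * ip M2 k1 k2"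
proof -
  have "ip (M1 \<Otimes>\<^sub>M M2) (\<lambda>(x, y). g1 x * k1 y) (\<lambda>(x, y). g2 x * k2 y)
      = integral\<^sup>L (M1 \<Otimes>\<^sub>M M2) (\<lambda>(x, y). (g1 x * g2 x) * (k1 y * k2 y))"
    unfolding ip_def by (intro Bochner_Integration.integral_cong) (auto simp: mult_ac)
  then show ?thesis unfolding integral_tensor[OF assms] by (simp add: ip_def)
qed

lemma (in pair_sigma_finite) tensor_L2set:
  fixes g :: "'a \<Rightarrow> real" and k :: "'b \<Rightarrow> real"
  assumes g: "g \<in> L2set M1" and k: "k \<in> L2set M2"
  shows "(\<lambda>(x, y). g x * k y) \<in> L2set (M1 \<Otimes>\<^sub>M M2)"
proof -
  have [measurable]: "g \<in> borel_measurable M1" "k \<in> borel_measurable M2"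
    using g k by (auto simp: L2set_def)
  have "integrable (M1 \<Otimes>\<^sub>M M2) (\<lambda>(x, y). (g x)^2 * (k y)^2)"
    using g k by (intro integrable_tensor) (auto simp: L2set_def)
  then have "integrable (M1 \<Otimes>\<^sub>M M2) (\<lambda>z. (case z of (x, y) \<Rightarrow> g x * k y)^2)"
    by (rule Bochner_Integration.integrable_cong[THEN iffD1, rotated 2]) (auto simp: power_mult_distrib)
  then show ?thesis unfolding L2set_def by auto
qed

section \<open>Integrals over half-lines\<close>

context real_distribution
begin

lemma borel_measurable_iff_borel [simp]: "g \<in> borel_measurable M \<longleftrightarrow> g \<in> borel_measurable borel"
  by (simp add: measurable_cong_sets[OF events_eq_borel refl])

lemma borel_measurable_head_integral:
  fixes g :: "real \<Rightarrow> 'b::{banach, second_countable_topology}"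
  assumes [measurable]: "g \<in> borel_measurable borel"
  shows "(\<lambda>y. LINT x|M. indicator {..y} x *\<^sub>R g x) \<in> borel_measurable borel"
proof -
  have "(\<lambda>(y, x). indicator {..y} x *\<^sub>R g x) = (\<lambda>p::real\<times>real. (if snd p \<le> fst p then 1 else 0) *\<^sub>R g (snd p))"
    by (auto simp: fun_eq_iff indicator_def)
  also have "\<dots> \<in> borel_measurable (borel \<Otimes>\<^sub>M M)" by measurable
  finally show ?thesis
    using borel_measurable_lebesgue_integral[of "\<lambda>y x. indicator {..y} x *\<^sub>R g x" borel] by simp
qed

lemma borel_measurable_tail_integral:
  fixes g :: "real \<Rightarrow> real"
  assumes [measurable]: "g \<in> borel_measurable borel"
  shows "(\<lambda>y. LINT x|M. indicator {y..} x * g x) \<in> borel_measurable borel"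
proof -
  have "(\<lambda>(y, x). indicator {y..} x * g x) = (\<lambda>p::real\<times>real. (if fst p \<le> snd p then 1 else 0) * g (snd p))"
    by (auto simp: fun_eq_iff indicator_def)
  also have "\<dots> \<in> borel_measurable (borel \<Otimes>\<^sub>M M)" by measurable
  finally show ?thesis
    using borel_measurable_lebesgue_integral[of "\<lambda>y x. indicator {y..} x * g x" borel] by simp
qed

lemma integral_head_integral_swap:
  fixes k g :: "real \<Rightarrow> real"
  assumes k: "integrable M (\<lambda>z. indicator {..b} z * k z)"
    and g: "integrable M (\<lambda>s. indicator {..b} s * g s)"
  shows "(LINT z|M. indicator {..b} z * k z * (LINT s|M. indicator {..z} s * g s))
       = (LINT s|M. indicator {..b} s * g s * (LINT z|M. indicator {s..b} z * k z))"
proof -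
  interpret pair_sigma_finite M M ..
  define kb where "kb z = indicator {..b} z * k z" for z
  define gb where "gb s = indicator {..b} s * g s" for s
  have [measurable]: "kb \<in> borel_measurable borel" "gb \<in> borel_measurable borel"
    using borel_measurable_integrable[OF k] borel_measurable_integrable[OF g]
    unfolding kb_def[abs_def] gb_def[abs_def] by simp_all
  define F where "F z s = kb z * (if s \<le> z then 1 else 0) * gb s" for z s :: real
  have "integrable (M \<Otimes>\<^sub>M M) (\<lambda>(z, s). F z s)"
  proof (rule Bochner_Integration.integrable_bound[OF integrable_tensor[OF k g]])
    show "(\<lambda>(z, s). F z s) \<in> borel_measurable (M \<Otimes>\<^sub>M M)" unfolding F_def by measurable
    show "AE x in M \<Otimes>\<^sub>M M. norm (case x of (z, s) \<Rightarrow> F z s)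
        \<le> norm (case x of (z, s) \<Rightarrow> indicator {..b} z * k z * (indicator {..b} s * g s))"
      by (intro AE_I2) (auto simp: F_def kb_def gb_def abs_mult)
  qed
  then have swap: "(LINT s|M. LINT z|M. F z s) = (LINT z|M. LINT s|M. F z s)"
    by (rule Fubini_integral)
  have F1: "F z s = kb z * (indicator {..z} s * g s)" and F2: "F z s = gb s * (indicator {s..b} z * k z)" for z s
    unfolding F_def kb_def gb_def by (auto simp: indicator_def)
  have "(LINT z|M. kb z * (LINT s|M. indicator {..z} s * g s)) = (LINT z|M. LINT s|M. F z s)"
    by (simp add: F1)
  also have "\<dots> = (LINT s|M. LINT z|M. F z s)" by (rule swap[symmetric])
  also have "\<dots> = (LINT s|M. gb s * (LINT z|M. indicator {s..b} z * k z))"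
    by (simp add: F2)
  finally show ?thesis by (simp add: kb_def gb_def)
qed

lemma abs_head_integral_le:
  fixes g :: "real \<Rightarrow> real"
  assumes "integrable M (\<lambda>s. indicator {..b} s * g s)"
  shows "\<bar>indicator {..b} z * (LINT s|M. indicator {..z} s * g s)\<bar> \<le> (LINT s|M. \<bar>indicator {..b} s * g s\<bar>)"
proof (cases "z \<le> b")
  case True
  have "(LINT s|M. indicator {..z} s * g s) = (LINT s|M. indicator {..z} s * (indicator {..b} s * g s))"
    using True by (intro Bochner_Integration.integral_cong) (auto simp: indicator_def)
  then show ?thesis
    using True abs_set_integral_le_integral_abs[OF assms, of "{..z}"] by simp
qed (auto intro!: integral_nonneg_AE)

lemma head_integral_tendsto:
  fixes g :: "real \<Rightarrow> real"
  assumes b: "incseq b" "AE x in M. \<exists>n. x < b n" and g: "integrable M g"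
  shows "(\<lambda>n. LINT x|M. indicator {..b n} x * g x) \<longlonglongrightarrow> (LINT x|M. g x)"
proof (rule integral_dominated_convergence[where w="\<lambda>x. \<bar>g x\<bar>"])
  show "AE x in M. (\<lambda>n. indicator {..b n} x * g x) \<longlonglongrightarrow> g x"
    using b(2)
  proof eventually_elim
    fix x assume "\<exists>n. x < b n"
    then obtain n where n: "x < b n" by blast
    have "indicator {..b m} x * g x = g x" if "n \<le> m" for m
      using n incseqD[OF b(1) that] by (auto simp: indicator_def)
    then show "(\<lambda>n. indicator {..b n} x * g x) \<longlonglongrightarrow> g x"
      by (intro tendsto_eventually eventually_sequentiallyI)
  qed
qed (use g in \<open>auto simp: indicator_def\<close>)

lemma tail_integral_tendsto_0:
  fixes g :: "real \<Rightarrow> real"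
  assumes b: "incseq b" "AE x in M. \<exists>n. x < b n" and g: "integrable M g"
  shows "(\<lambda>n. LINT x|M. indicator {b n..} x * g x) \<longlonglongrightarrow> 0"
proof -
  have head: "(\<lambda>n. LINT x|M. indicator {..<b n} x * g x) \<longlonglongrightarrow> (LINT x|M. g x)"
  proof (rule integral_dominated_convergence[where w="\<lambda>x. \<bar>g x\<bar>"])
    show "AE x in M. (\<lambda>n. indicator {..<b n} x * g x) \<longlonglongrightarrow> g x"
      using b(2)
    proof eventually_elim
      fix x assume "\<exists>n. x < b n"
      then obtain n where n: "x < b n" by blast
      have "indicator {..<b m} x * g x = g x" if "n \<le> m" for m
        using n incseqD[OF b(1) that] by (auto simp: indicator_def)
      then show "(\<lambda>n. indicator {..<b n} x * g x) \<longlonglongrightarrow> g x"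
        by (intro tendsto_eventually eventually_sequentiallyI)
    qed
  qed (use g in \<open>auto simp: indicator_def\<close>)
  have "(LINT x|M. indicator {b n..} x * g x) = (LINT x|M. g x) - (LINT x|M. indicator {..<b n} x * g x)" for n
  proof -
    have "(\<lambda>x. indicator {b n..} x * g x) = (\<lambda>x. g x - indicator {..<b n} x * g x)"
      by (auto simp: fun_eq_iff indicator_def)
    then show ?thesis using g integrable_mult_indicator[of "{..<b n}" M g] by simp
  qed
  then show ?thesis using tendsto_diff[OF tendsto_const[of "LINT x|M. g x"] head] by simp
qed

end

locale atomless_real_distribution = real_distribution +
  assumes measure_singleton [simp]: "measure M {x} = 0"
begin

lemma AE_neq: "AE x in M. x \<noteq> c"
  using AE_not_in[of "{c}" M] by (simp add: null_sets_def emeasure_eq_measure)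

lemma measure_atLeast: "measure M {y..} = 1 - cdf M y"
proof -
  have "{y..} = {y<..} \<union> {y}" by auto
  then have "measure M {y..} = measure M {y<..}"
    using measure_Un_null_set[of "{y<..}" M "{y}"] by (simp add: null_sets_def emeasure_eq_measure)
  also have "\<dots> = 1 - cdf M y"
    using prob_compl[of "{..y}"] by (simp add: cdf_def2 Compl_eq_Diff_UNIV[symmetric])
  finally show ?thesis .
qed

lemma null_atLeast: "1 \<le> cdf M y \<Longrightarrow> {y..} \<in> null_sets M"
  using measure_atLeast[of y] measure_nonneg[of M "{y..}"] by (simp add: null_sets_def emeasure_eq_measure)

lemma cdf_attains:
  assumes "0 < t" "t < 1"
  shows "\<exists>y. cdf M y = t"
proof -
  have "eventually (\<lambda>x. cdf M x < t) at_bot"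
    using cdf_lim_at_bot assms(1) by (rule order_tendstoD)
  then obtain a where a: "cdf M a < t" by (auto simp: eventually_at_bot_linorder)
  have "eventually (\<lambda>x. t < cdf M x) at_top"
    using cdf_lim_at_top_prob assms(2) by (rule order_tendstoD)
  then obtain c where c: "\<And>x. c \<le> x \<Longrightarrow> t < cdf M x" by (auto simp: eventually_at_top_linorder)
  have "\<exists>y. a \<le> y \<and> y \<le> max a c \<and> cdf M y = t"
    using a c[of "max a c"] by (intro IVT) (auto simp: isCont_cdf)
  then show ?thesis by blast
qed

lemma exhausting_sequence: "\<exists>b. incseq b \<and> (\<forall>n. cdf M (b n) < 1) \<and> (AE x in M. \<exists>n. x < b n)"
proof -
  have "\<exists>y. cdf M y = 1 - inverse (real n + 2)" for n
    by (rule cdf_attains) (auto simp: field_simps)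
  then obtain b where b: "\<And>n. cdf M (b n) = 1 - inverse (real n + 2)" by metis
  have inc: "incseq b"
  proof (rule incseq_SucI, rule ccontr)
    fix n assume "\<not> b n \<le> b (Suc n)"
    then have "cdf M (b (Suc n)) \<le> cdf M (b n)" by (intro cdf_nondecreasing) simp
    then show False by (simp add: b field_simps)
  qed
  define N where "N = (\<Inter>n. {b n..})"
  have "measure M N \<le> inverse (real (Suc (Suc n)))" for n
  proof -
    have "measure M N \<le> measure M {b n..}" unfolding N_def by (intro finite_measure_mono) auto
    then show ?thesis by (simp add: measure_atLeast b add.commute)
  qed
  moreover have "(\<lambda>n. inverse (real (Suc (Suc n)))) \<longlonglongrightarrow> 0"
    using LIMSEQ_Suc[OF LIMSEQ_inverse_real_of_nat] by simp
  ultimately have "measure M N \<le> 0" by (intro LIMSEQ_le_const) auto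
  then have "measure M N = 0" using measure_nonneg[of M N] by linarith
  then have "N \<in> null_sets M" by (simp add: N_def null_sets_def emeasure_eq_measure)
  then have "AE x in M. \<exists>n. x < b n"
    by (rule AE_I') (auto simp: N_def not_less)
  with inc b show ?thesis by (intro exI[of _ b]) simp
qed

lemma tail_integral_diff:
  fixes k :: "real \<Rightarrow> real"
  assumes k: "integrable M k" and sb: "s \<le> b"
  shows "(LINT z|M. indicator {s..b} z * k z) = (LINT z|M. indicator {s..} z * k z) - (LINT z|M. indicator {b..} z * k z)"
proof -
  have "(LINT z|M. indicator {s..} z * k z) = (LINT z|M. indicator {s..b} z * k z + indicator {b<..} z * k z)"
    using sb by (intro Bochner_Integration.integral_cong) (auto simp: indicator_def)
  also have "\<dots> = (LINT z|M. indicator {s..b} z * k z) + (LINT z|M. indicator {b<..} z * k z)"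
    using k by (intro Bochner_Integration.integral_add) (auto intro: integrable_indicator_times)
  also have "(LINT z|M. indicator {b<..} z * k z) = (LINT z|M. indicator {b..} z * k z)"
    using borel_measurable_integrable[OF k]
    by (intro integral_cong_AE) (auto intro!: eventually_mono[OF AE_neq[of b]] simp: indicator_def)
  finally show ?thesis by simp
qed

lemma head_integral_diff:
  fixes k :: "real \<Rightarrow> real"
  assumes k: "integrable M (\<lambda>z. indicator {..b} z * k z)" and sb: "s \<le> b"
  shows "(LINT z|M. indicator {s..b} z * k z) = (LINT z|M. indicator {..b} z * k z) - (LINT z|M. indicator {..s} z * k z)"
proof -
  let ?kb = "\<lambda>z. indicator {..b} z * k z"
  have "(LINT z|M. ?kb z) = (LINT z|M. indicator {s..} z * ?kb z + indicator {..<s} z * ?kb z)"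
    by (intro Bochner_Integration.integral_cong) (auto simp: indicator_def)
  also have "\<dots> = (LINT z|M. indicator {s..} z * ?kb z) + (LINT z|M. indicator {..<s} z * ?kb z)"
    using k by (intro Bochner_Integration.integral_add) (auto intro: integrable_indicator_times)
  also have "(LINT z|M. indicator {..<s} z * ?kb z) = (LINT z|M. indicator {..s} z * ?kb z)"
    using borel_measurable_integrable[OF k]
    by (intro integral_cong_AE) (auto intro!: eventually_mono[OF AE_neq[of s]] simp: indicator_def)
  also have "(LINT z|M. indicator {s..} z * ?kb z) = (LINT z|M. indicator {s..b} z * k z)"
    by (intro Bochner_Integration.integral_cong) (auto simp: indicator_def)
  also have "(LINT z|M. indicator {..s} z * ?kb z) = (LINT z|M. indicator {..s} z * k z)"
    using sb by (intro Bochner_Integration.integral_cong) (auto simp: indicator_def)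
  finally show ?thesis by simp
qed

lemma integral_head_integral_swap_tail:
  fixes k g :: "real \<Rightarrow> real"
  assumes k: "integrable M k" and g: "integrable M (\<lambda>s. indicator {..b} s * g s)"
  shows "(LINT z|M. indicator {..b} z * k z * (LINT s|M. indicator {..z} s * g s))
       = (LINT s|M. indicator {..b} s * g s * (LINT x|M. indicator {s..} x * k x))
         - (LINT x|M. indicator {b..} x * k x) * (LINT s|M. indicator {..b} s * g s)"
proof -
  define T where "T s = (LINT x|M. indicator {s..} x * k x)" for s
  have T_borel: "T \<in> borel_measurable borel" unfolding T_def[abs_def]
    by (rule borel_measurable_tail_integral) (use borel_measurable_integrable[OF k] in simp)
  have T_bound: "\<bar>T s\<bar> \<le> (LINT x|M. \<bar>k x\<bar>)" for s
    unfolding T_def by (rule abs_set_integral_le_integral_abs[OF k]) simp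
  have "(LINT z|M. indicator {..b} z * k z * (LINT s|M. indicator {..z} s * g s))
       = (LINT s|M. indicator {..b} s * g s * (LINT z|M. indicator {s..b} z * k z))"
    using k g by (intro integral_head_integral_swap) (auto intro: integrable_indicator_times)
  also have "\<dots> = (LINT s|M. T s * (indicator {..b} s * g s) - T b * (indicator {..b} s * g s))"
  proof (rule Bochner_Integration.integral_cong[OF refl])
    fix s
    show "indicator {..b} s * g s * (LINT z|M. indicator {s..b} z * k z)
        = T s * (indicator {..b} s * g s) - T b * (indicator {..b} s * g s)"
    proof (cases "s \<le> b")
      case True
      then show ?thesis unfolding tail_integral_diff[OF k True] T_def by (simp add: algebra_simps)
    qed simp
  qed
  also have "\<dots> = (LINT s|M. T s * (indicator {..b} s * g s)) - T b * (LINT s|M. indicator {..b} s * g s)"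
    using integrable_bounded_mult[OF g _ T_bound] T_borel g by simp
  finally show ?thesis unfolding T_def by (simp add: mult.commute mult.left_commute)
qed

lemma head_integral_times_head_integral:
  fixes K g V :: "real \<Rightarrow> real"
  assumes K: "integrable M (\<lambda>z. indicator {..b} z * K z)" and g: "integrable M (\<lambda>s. indicator {..b} s * g s)"
    and V: "\<And>s. s \<le> b \<Longrightarrow> (LINT x|M. indicator {..s} x * K x) = V s"
  shows "integrable M (\<lambda>s. indicator {..b} s * g s * V s)"
    and "(LINT z|M. indicator {..b} z * K z * (LINT s|M. indicator {..z} s * g s))
       = V b * (LINT s|M. indicator {..b} s * g s) - (LINT s|M. indicator {..b} s * g s * V s)"
proof -
  define W where "W s = indicator {..b} s * (LINT x|M. indicator {..s} x * (indicator {..b} x * K x))" for s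
  have W_borel: "W \<in> borel_measurable borel"
    using borel_measurable_head_integral[of "\<lambda>x. indicator {..b} x * K x"] borel_measurable_integrable[OF K]
    unfolding W_def[abs_def] by simp
  have "(\<lambda>x. indicator {..b} x * (indicator {..b} x * K x)) = (\<lambda>x. indicator {..b} x * K x)"
    by (auto simp: fun_eq_iff indicator_def)
  then have W_bound: "\<bar>W s\<bar> \<le> (LINT x|M. \<bar>indicator {..b} x * (indicator {..b} x * K x)\<bar>)" for s
    unfolding W_def by (intro abs_head_integral_le) (simp add: K)
  have "integrable M (\<lambda>s. W s * (indicator {..b} s * g s))"
    using integrable_bounded_mult[OF g _ W_bound] W_borel by simp
  moreover have "W s * (indicator {..b} s * g s) = indicator {..b} s * g s * V s" for s
  proof (cases "s \<le> b")
    case True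
    have "(LINT x|M. indicator {..s} x * (indicator {..b} x * K x)) = (LINT x|M. indicator {..s} x * K x)"
      using True by (intro Bochner_Integration.integral_cong) (auto simp: indicator_def)
    then show ?thesis using True V[OF True] by (simp add: W_def)
  qed (simp add: W_def)
  ultimately show gV: "integrable M (\<lambda>s. indicator {..b} s * g s * V s)" by simp
  have "(LINT z|M. indicator {..b} z * K z * (LINT s|M. indicator {..z} s * g s))
      = (LINT s|M. indicator {..b} s * g s * (LINT z|M. indicator {s..b} z * K z))"
    by (rule integral_head_integral_swap[OF K g])
  also have "\<dots> = (LINT s|M. V b * (indicator {..b} s * g s) - indicator {..b} s * g s * V s)"
  proof (rule Bochner_Integration.integral_cong[OF refl])
    fix s
    show "indicator {..b} s * g s * (LINT z|M. indicator {s..b} z * K z)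
        = V b * (indicator {..b} s * g s) - indicator {..b} s * g s * V s"
    proof (cases "s \<le> b")
      case True
      then show ?thesis using V[OF True] V[OF order_refl]
        unfolding head_integral_diff[OF K True] by (simp add: algebra_simps)
    qed simp
  qed
  also have "\<dots> = V b * (LINT s|M. indicator {..b} s * g s) - (LINT s|M. indicator {..b} s * g s * V s)"
    using g gV by simp
  finally show "(LINT z|M. indicator {..b} z * K z * (LINT s|M. indicator {..z} s * g s))
       = V b * (LINT s|M. indicator {..b} s * g s) - (LINT s|M. indicator {..b} s * g s * V s)" .
qed

end

section \<open>The process xi_hat\<close>

lemma alpha1_tensor_centered:
  assumes "(LINT y|MF. \<phi> y) = 0"
  shows "alpha1 MF (\<lambda>(x, y). \<gamma> x * \<phi> y) = (\<lambda>(x, y). \<gamma> x * \<phi> y)"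
  using assms by (auto simp: alpha1_def fun_eq_iff)

lemma xi_hat_orthogonal:
  fixes m :: "'q::finite \<Rightarrow> 'a \<times> real \<Rightarrow> real"
  assumes "alpha1 MF \<alpha> = \<alpha>" and "\<And>j. ip HF \<alpha> (m j) = 0"
  shows "xi_hat HF MF m b \<alpha> \<omega> = b \<alpha> \<omega>"
proof -
  have "((\<chi> j. ip HF \<alpha> (m j)) :: real^'q) = 0" using assms(2) by (simp add: vec_eq_iff)
  moreover have "(0::real^'q) v* A = 0" for A :: "real^'q^'q"
    by (simp add: vector_matrix_mult_def vec_eq_iff)
  ultimately show ?thesis by (simp add: xi_hat_def assms(1))
qed

lemma zero_mean_gaussian_reindex:
  assumes X: "zero_mean_gaussian P I X" and A: "A ` J \<subseteq> I" and Y: "\<And>j. j \<in> J \<Longrightarrow> Y j = X (A j)"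
  shows "zero_mean_gaussian P J Y"
  unfolding zero_mean_gaussian_def
proof (intro conjI ballI allI impI)
  fix j assume "j \<in> J"
  then show "Y j \<in> borel_measurable P" using X A Y by (auto simp: zero_mean_gaussian_def)
next
  fix js and cs :: "real list"
  assume js: "set js \<subseteq> J" and len: "length cs = length js"
  have "set (map A js) \<subseteq> I" "length cs = length (map A js)" using js A len by auto
  then obtain v where "centered_normal P (\<lambda>\<omega>. \<Sum>k<length (map A js). cs!k * X (map A js ! k) \<omega>) v"
    using X unfolding zero_mean_gaussian_def by blast
  moreover have "(\<lambda>\<omega>. \<Sum>k<length js. cs!k * Y (js!k) \<omega>) = (\<lambda>\<omega>. \<Sum>k<length (map A js). cs!k * X (map A js ! k) \<omega>)"
    using js Y nth_mem by (fastforce intro!: sum.cong)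
  ultimately show "\<exists>v. centered_normal P (\<lambda>\<omega>. \<Sum>k<length js. cs!k * Y (js!k) \<omega>) v" by auto
qed

section \<open>Tail moments of the score\<close>

locale fisher_density =
  fixes f f' :: "real \<Rightarrow> real"
  assumes f_meas: "f \<in> borel_measurable borel"
    and f_nonneg: "\<forall>y. 0 \<le> f y"
    and f_int: "integrable lborel f"
    and f_one: "integral\<^sup>L lborel f = 1"
    and f_ac: "\<forall>a b. a \<le> b \<longrightarrow>
                 set_integrable lborel {a..b} f' \<and> (LBINT x:{a..b}. f' x) = f b - f a"
    and fisher_int: "integrable (distF f) (\<lambda>y. (psi f f' y)^2)"
    and Gam_nonsing: "\<forall>y. measure (distF f) {..y} < 1 \<longrightarrow> invertible (Gam f f' y)"

sublocale fisher_density \<subseteq> atomless_real_distribution "distF f"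
proof -
  have f_borel: "f \<in> borel_measurable lborel" using f_meas by simp
  have "emeasure (distF f) (space (distF f)) = (\<integral>\<^sup>+ x. ennreal (f x) \<partial>lborel)"
    unfolding distF_def using f_borel by (subst emeasure_density) auto
  also have "\<dots> = ennreal (integral\<^sup>L lborel f)"
    using f_int f_nonneg by (intro nn_integral_eq_integral) auto
  finally have "prob_space (distF f)" using f_one by (intro prob_spaceI) simp
  moreover have "measure (distF f) {x} = 0" for x
  proof -
    have "emeasure (distF f) {x} = (\<integral>\<^sup>+ y. ennreal (f y) * indicator {x} y \<partial>lborel)"
      unfolding distF_def using f_borel by (subst emeasure_density) auto
    also have "\<dots> = (\<integral>\<^sup>+ (y::real). 0 \<partial>lborel)"
      using AE_lborel_singleton[of x] by (intro nn_integral_cong_AE) (auto elim!: eventually_mono)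
    finally show ?thesis by (simp add: measure_def)
  qed
  ultimately show "atomless_real_distribution (distF f)"
    by (intro atomless_real_distribution.intro real_distribution.intro
        atomless_real_distribution_axioms.intro real_distribution_axioms.intro) (auto simp: distF_def)
qed

context fisher_density
begin

abbreviation dF :: "real measure" where "dF \<equiv> distF f"

abbreviation \<psi> :: "real \<Rightarrow> real" where "\<psi> \<equiv> psi f f'"

lemma f'_borel: "f' \<in> borel_measurable borel"
proof (rule borel_measurable_LIMSEQ_real)
  fix n :: nat
  have "set_integrable lborel {- real n..real n} f'" using f_ac by auto
  then have "(\<lambda>x. indicator {- real n..real n} x *\<^sub>R f' x) \<in> borel_measurable lborel"
    unfolding set_integrable_def by (rule borel_measurable_integrable)
  then show "(\<lambda>x. indicator {- real n..real n} x *\<^sub>R f' x) \<in> borel_measurable borel" by simp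
next
  fix x :: real
  obtain N :: nat where N: "\<bar>x\<bar> \<le> real N" using real_arch_simple by blast
  have "indicator {- real n..real n} x *\<^sub>R f' x = f' x" if "N \<le> n" for n
    using N that by (auto simp: indicator_def)
  then show "(\<lambda>n. indicator {- real n..real n} x *\<^sub>R f' x) \<longlonglongrightarrow> f' x"
    by (intro tendsto_eventually eventually_sequentiallyI)
qed

lemma score_borel [measurable]: "\<psi> \<in> borel_measurable borel"
  unfolding psi_def using f'_borel f_meas by measurable

lemma score_L2set: "\<psi> \<in> L2set dF"
  using fisher_int by (simp add: L2set_def)

lemma score_integrable: "integrable dF \<psi>"
  by (rule L2set_integrable[OF score_L2set])

definition tail_mass :: "real \<Rightarrow> real" where
  "tail_mass y = measure dF {y..}"

definition tail_score :: "real \<Rightarrow> real" where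
  "tail_score y = (LINT x|dF. indicator {y..} x * \<psi> x)"

definition tail_info :: "real \<Rightarrow> real" where
  "tail_info y = (LINT x|dF. indicator {y..} x * (\<psi> x)^2)"

definition tail_det :: "real \<Rightarrow> real" where
  "tail_det y = tail_mass y * tail_info y - (tail_score y)^2"

definition below_top :: "real set" where
  "below_top = {y. cdf dF y < 1}"

lemma Gam_entries:
  "Gam f f' y $ 1 $ 1 = tail_mass y" "Gam f f' y $ 1 $ 2 = tail_score y"
  "Gam f f' y $ 2 $ 1 = tail_score y" "Gam f f' y $ 2 $ 2 = tail_info y"
proof -
  define E11 :: "real^2^2" where "E11 = (\<chi> i j. if i = 1 \<and> j = 1 then 1 else 0)"
  define E12 :: "real^2^2" where "E12 = (\<chi> i j. if i \<noteq> j then 1 else 0)"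
  define E22 :: "real^2^2" where "E22 = (\<chi> i j. if i = 2 \<and> j = 2 then 1 else 0)"
  have outer: "outer (hvec f f' z) = E11 + \<psi> z *\<^sub>R E12 + (\<psi> z)^2 *\<^sub>R E22" for z
    by (simp add: outer_def hvec_def E11_def E12_def E22_def vec_eq_iff forall_2 power2_eq_square)
  have i: "integrable dF (\<lambda>x. indicator {y..} x * (1::real))" "integrable dF (\<lambda>x. indicator {y..} x * \<psi> x)"
    "integrable dF (\<lambda>x. indicator {y..} x * (\<psi> x)^2)"
    by (intro integrable_indicator_times score_integrable fisher_int; simp)+
  have "Gam f f' y = (LINT x|dF. (indicator {y..} x * 1) *\<^sub>R E11 + (indicator {y..} x * \<psi> x) *\<^sub>R E12
      + (indicator {y..} x * (\<psi> x)^2) *\<^sub>R E22)"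
    unfolding Gam_def set_lebesgue_integral_def outer
    by (intro Bochner_Integration.integral_cong) (auto simp: scaleR_add_right)
  also have "\<dots> = tail_mass y *\<^sub>R E11 + tail_score y *\<^sub>R E12 + tail_info y *\<^sub>R E22"
    unfolding tail_score_def tail_info_def
    using Bochner_Integration.integral_add[OF Bochner_Integration.integrable_add[OF integrable_scaleR_left[OF i(1)]
        integrable_scaleR_left[OF i(2)]] integrable_scaleR_left[OF i(3)]]
      Bochner_Integration.integral_add[OF integrable_scaleR_left[OF i(1)] integrable_scaleR_left[OF i(2)]]
      integral_scaleR_left i
    by (simp add: tail_mass_def del: mult_1_right)
  finally have "Gam f f' y = tail_mass y *\<^sub>R E11 + tail_score y *\<^sub>R E12 + tail_info y *\<^sub>R E22" .
  then show "Gam f f' y $ 1 $ 1 = tail_mass y" "Gam f f' y $ 1 $ 2 = tail_score y"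
    "Gam f f' y $ 2 $ 1 = tail_score y" "Gam f f' y $ 2 $ 2 = tail_info y"
    by (simp_all add: E11_def E12_def E22_def)
qed

lemma det_Gam: "det (Gam f f' y) = tail_det y"
  by (simp add: det_2 Gam_entries tail_det_def power2_eq_square)

lemma tail_mass_nonneg: "0 \<le> tail_mass y" and tail_mass_le_1: "tail_mass y \<le> 1"
  by (simp_all add: tail_mass_def)

lemma tail_info_nonneg: "0 \<le> tail_info y"
  unfolding tail_info_def by (intro integral_nonneg_AE) auto

lemma tail_info_le: "tail_info y \<le> (LINT x|dF. (\<psi> x)^2)"
  using abs_set_integral_le_integral_abs[OF fisher_int, of "{y..}"] by (simp add: tail_info_def)

lemma abs_tail_score_le: "\<bar>tail_score y\<bar> \<le> (LINT x|dF. \<bar>\<psi> x\<bar>)"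
  unfolding tail_score_def by (rule abs_set_integral_le_integral_abs[OF score_integrable]) simp

lemma tail_score_square_le: "(tail_score y)^2 \<le> tail_mass y * tail_info y"
  unfolding tail_score_def tail_mass_def tail_info_def by (rule square_set_integral_le[OF score_L2set]) simp

lemma tail_det_antimono:
  assumes "z \<le> y"
  shows "tail_det y \<le> tail_det z"
proof -
  have split: "(LINT x|dF. indicator {z..} x * g x)
      = (LINT x|dF. indicator {z..<y} x * g x) + (LINT x|dF. indicator {y..} x * g x)"
    if "integrable dF g" for g :: "real \<Rightarrow> real"
  proof -
    have "(\<lambda>x. indicator {z..} x * g x) = (\<lambda>x. indicator {z..<y} x * g x + indicator {y..} x * g x)"
      using assms by (auto simp: fun_eq_iff indicator_def)
    then show ?thesis using that by (simp add: integrable_indicator_times)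
  qed
  define \<alpha> where "\<alpha> = measure dF {z..<y}"
  define \<gamma> where "\<gamma> = (LINT x|dF. indicator {z..<y} x * \<psi> x)"
  define \<delta> where "\<delta> = (LINT x|dF. indicator {z..<y} x * (\<psi> x)^2)"
  have "tail_mass z = \<alpha> + tail_mass y"
    using split[of "\<lambda>_. 1"] by (simp add: tail_mass_def \<alpha>_def)
  moreover have "tail_score z = \<gamma> + tail_score y"
    using split[OF score_integrable] by (simp add: tail_score_def \<gamma>_def)
  moreover have "tail_info z = \<delta> + tail_info y"
    using split[OF fisher_int] by (simp add: tail_info_def \<delta>_def)
  moreover have "\<gamma>^2 \<le> \<alpha> * \<delta>"
    unfolding \<alpha>_def \<gamma>_def \<delta>_def by (rule square_set_integral_le[OF score_L2set]) simp
  moreover have "0 \<le> \<alpha>" "0 \<le> \<delta>"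
    unfolding \<alpha>_def \<delta>_def by (auto intro!: integral_nonneg_AE)
  ultimately show ?thesis
    using psd2_det_le_det_add[of "tail_mass y" "tail_info y" \<alpha> \<delta> "tail_score y" \<gamma>]
      tail_mass_nonneg tail_info_nonneg tail_score_square_le
    unfolding tail_det_def by (simp add: algebra_simps)
qed

lemma below_top_downward: "z \<le> y \<Longrightarrow> y \<in> below_top \<Longrightarrow> z \<in> below_top"
  unfolding below_top_def using cdf_nondecreasing[of z y] by simp

lemma below_top_borel [measurable]: "below_top \<in> sets borel"
proof -
  have "cdf dF \<in> borel_measurable borel"
    by (rule borel_measurable_mono) (auto simp: mono_def cdf_nondecreasing)
  then show ?thesis unfolding below_top_def by measurable
qed

lemma tail_det_pos: "y \<in> below_top \<Longrightarrow> 0 < tail_det y"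
  using Gam_nonsing invertible_det_nz[of "Gam f f' y"] tail_score_square_le[of y]
  unfolding below_top_def det_Gam cdf_def2 tail_det_def by force

lemma Gam_eq_0: "y \<notin> below_top \<Longrightarrow> Gam f f' y = 0"
proof -
  assume "y \<notin> below_top"
  then have "1 \<le> cdf dF y" by (simp add: below_top_def)
  then have "AE x in dF. x \<notin> {y..}" by (rule AE_not_in[OF null_atLeast])
  then have "AE x in dF. indicator {y..} x = (0::real)" by eventually_elim simp
  then have "(LINT x|dF. indicator {y..} x * g x) = 0" for g :: "real \<Rightarrow> real"
    by (intro integral_eq_zero_AE) (auto elim!: eventually_mono)
  from this[of "\<lambda>_. 1"] this[of \<psi>] this[of "\<lambda>x. (\<psi> x)^2"] show ?thesis
    by (simp add: vec_eq_iff forall_2 Gam_entries tail_mass_def tail_score_def tail_info_def)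
qed

lemma borel_measurable_tail_moments [measurable]:
  "tail_mass \<in> borel_measurable borel" "tail_score \<in> borel_measurable borel"
  "tail_info \<in> borel_measurable borel" "tail_det \<in> borel_measurable borel"
proof -
  show "tail_mass \<in> borel_measurable borel" "tail_score \<in> borel_measurable borel"
    "tail_info \<in> borel_measurable borel"
    using borel_measurable_tail_integral[of "\<lambda>_. 1"] borel_measurable_tail_integral[of \<psi>]
      borel_measurable_tail_integral[of "\<lambda>x. (\<psi> x)^2"]
    unfolding tail_mass_def[abs_def] tail_score_def[abs_def] tail_info_def[abs_def] by simp_all
  then show "tail_det \<in> borel_measurable borel"
    unfolding tail_det_def[abs_def] by measurable
qed

lemma exhausting_sequence_below_top:
  obtains b where "incseq b" "\<And>n. b n \<in> below_top" "AE x in dF. \<exists>n. x < b n"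
proof -
  obtain b where "incseq b" "\<forall>n. cdf dF (b n) < 1" "AE x in dF. \<exists>n. x < b n"
    using exhausting_sequence by blast
  then show thesis using that by (simp add: below_top_def)
qed

lemma AE_below_top: "AE x in dF. x \<in> below_top"
proof -
  obtain b where b: "incseq b" "\<And>n. b n \<in> below_top" "AE x in dF. \<exists>n. x < b n"
    using exhausting_sequence_below_top by blast
  from b(3) show ?thesis
    by eventually_elim (use b(2) below_top_downward less_imp_le in blast)
qed

lemma tail_moments_tendsto_0:
  assumes "incseq b" "AE x in dF. \<exists>n. x < b n"
  shows "(\<lambda>n. tail_mass (b n)) \<longlonglongrightarrow> 0" "(\<lambda>n. tail_score (b n)) \<longlonglongrightarrow> 0"
    "(\<lambda>n. tail_info (b n)) \<longlonglongrightarrow> 0"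
  using tail_integral_tendsto_0[OF assms, of "\<lambda>_. 1"] tail_integral_tendsto_0[OF assms score_integrable]
    tail_integral_tendsto_0[OF assms fisher_int]
  unfolding tail_mass_def tail_score_def tail_info_def by simp_all

section \<open>The transformation in coordinates\<close>

(* On below_top, where Gam f f' z is invertible, (dens1 \<phi> z, dens2 \<phi> z) is the row vector
   \<phi>(z) h(z)^T Gam(z)^-1.  Hence (comp1 \<phi> y, comp2 \<phi> y) is the integral occurring in Lop,
   and innov \<phi> is Lop f f' \<phi> written in coordinates. *)

definition dens1 :: "(real \<Rightarrow> real) \<Rightarrow> real \<Rightarrow> real" where
  "dens1 \<phi> z = \<phi> z * (tail_info z - tail_score z * \<psi> z) / tail_det z"

definition dens2 :: "(real \<Rightarrow> real) \<Rightarrow> real \<Rightarrow> real" where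
  "dens2 \<phi> z = \<phi> z * (tail_mass z * \<psi> z - tail_score z) / tail_det z"

definition comp1 :: "(real \<Rightarrow> real) \<Rightarrow> real \<Rightarrow> real" where
  "comp1 \<phi> y = (LINT z|dF. indicator {..y} z * dens1 \<phi> z)"

definition comp2 :: "(real \<Rightarrow> real) \<Rightarrow> real \<Rightarrow> real" where
  "comp2 \<phi> y = (LINT z|dF. indicator {..y} z * dens2 \<phi> z)"

definition innov :: "(real \<Rightarrow> real) \<Rightarrow> real \<Rightarrow> real" where
  "innov \<phi> y = \<phi> y - (comp1 \<phi> y + comp2 \<phi> y * \<psi> y)"

lemma borel_measurable_comp [measurable]:
  assumes [measurable]: "\<phi> \<in> borel_measurable borel"
  shows "dens1 \<phi> \<in> borel_measurable borel" "dens2 \<phi> \<in> borel_measurable borel"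
    "comp1 \<phi> \<in> borel_measurable borel" "comp2 \<phi> \<in> borel_measurable borel"
    "innov \<phi> \<in> borel_measurable borel"
proof -
  show d1: "dens1 \<phi> \<in> borel_measurable borel" and d2: "dens2 \<phi> \<in> borel_measurable borel"
    unfolding dens1_def[abs_def] dens2_def[abs_def] by measurable
  show c1: "comp1 \<phi> \<in> borel_measurable borel" and c2: "comp2 \<phi> \<in> borel_measurable borel"
    using borel_measurable_head_integral[OF d1] borel_measurable_head_integral[OF d2]
    unfolding comp1_def[abs_def] comp2_def[abs_def] by simp_all
  show "innov \<phi> \<in> borel_measurable borel"
    unfolding innov_def[abs_def] using c1 c2 by measurable
qed

lemma Gam_times_dens:
  assumes "s \<in> below_top"
  shows "dens1 \<phi> s * tail_mass s + dens2 \<phi> s * tail_score s = \<phi> s"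
    and "dens1 \<phi> s * tail_score s + dens2 \<phi> s * tail_info s = \<phi> s * \<psi> s"
proof -
  have D: "tail_det s \<noteq> 0" using tail_det_pos[OF assms] by simp
  have "dens1 \<phi> s * tail_mass s + dens2 \<phi> s * tail_score s
      = \<phi> s * ((tail_info s - tail_score s * \<psi> s) * tail_mass s + (tail_mass s * \<psi> s - tail_score s) * tail_score s)
        / tail_det s"
    unfolding dens1_def dens2_def
    by (simp only: times_divide_eq_left add_divide_distrib[symmetric]) (simp add: algebra_simps)
  also have "(tail_info s - tail_score s * \<psi> s) * tail_mass s + (tail_mass s * \<psi> s - tail_score s) * tail_score s
      = tail_det s"
    unfolding tail_det_def by (simp add: power2_eq_square algebra_simps)
  finally show "dens1 \<phi> s * tail_mass s + dens2 \<phi> s * tail_score s = \<phi> s" using D by simp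
  have "dens1 \<phi> s * tail_score s + dens2 \<phi> s * tail_info s
      = \<phi> s * ((tail_info s - tail_score s * \<psi> s) * tail_score s + (tail_mass s * \<psi> s - tail_score s) * tail_info s)
        / tail_det s"
    unfolding dens1_def dens2_def
    by (simp only: times_divide_eq_left add_divide_distrib[symmetric]) (simp add: algebra_simps)
  also have "(tail_info s - tail_score s * \<psi> s) * tail_score s + (tail_mass s * \<psi> s - tail_score s) * tail_info s
      = tail_det s * \<psi> s"
    unfolding tail_det_def by (simp add: power2_eq_square algebra_simps)
  finally show "dens1 \<phi> s * tail_score s + dens2 \<phi> s * tail_info s = \<phi> s * \<psi> s" using D by simp
qed

lemma head_integrable_weighted:
  assumes \<phi>: "\<phi> \<in> L2set dF" and b: "b \<in> below_top"
    and r [measurable]: "r \<in> borel_measurable borel" and r_bound: "\<And>z. \<bar>r z\<bar> \<le> A + B * \<bar>\<psi> z\<bar>"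
  shows "integrable dF (\<lambda>z. indicator {..b} z * (\<phi> z * r z / tail_det z))"
proof (rule Bochner_Integration.integrable_bound)
  have [measurable]: "\<phi> \<in> borel_measurable borel" using \<phi> by (simp add: L2set_def)
  show "integrable dF (\<lambda>z. (A * \<bar>\<phi> z\<bar> + B * \<bar>\<phi> z * \<psi> z\<bar>) / tail_det b)"
    using L2set_integrable[OF \<phi>] L2set_integrable_mult[OF \<phi> score_L2set] by simp
  show "(\<lambda>z. indicator {..b} z * (\<phi> z * r z / tail_det z)) \<in> borel_measurable dF" by simp
  have num: "\<bar>\<phi> z * r z\<bar> \<le> A * \<bar>\<phi> z\<bar> + B * \<bar>\<phi> z * \<psi> z\<bar>" for z
  proof -
    have "\<bar>\<phi> z\<bar> * \<bar>r z\<bar> \<le> \<bar>\<phi> z\<bar> * (A + B * \<bar>\<psi> z\<bar>)" by (rule mult_left_mono[OF r_bound]) simp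
    then show ?thesis by (simp add: abs_mult algebra_simps)
  qed
  have "\<bar>indicator {..b} z * (\<phi> z * r z / tail_det z)\<bar> \<le> (A * \<bar>\<phi> z\<bar> + B * \<bar>\<phi> z * \<psi> z\<bar>) / tail_det b" for z
  proof (cases "z \<le> b")
    case True
    have det: "0 < tail_det b" "tail_det b \<le> tail_det z"
      using tail_det_pos[OF b] tail_det_antimono[OF True] by auto
    have "\<bar>\<phi> z * r z / tail_det z\<bar> = \<bar>\<phi> z * r z\<bar> / tail_det z" using det by simp
    also have "\<dots> \<le> \<bar>\<phi> z * r z\<bar> / tail_det b" using det by (intro divide_left_mono) auto
    also have "\<dots> \<le> (A * \<bar>\<phi> z\<bar> + B * \<bar>\<phi> z * \<psi> z\<bar>) / tail_det b"
      using det num[of z] by (intro divide_right_mono) auto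
    finally show ?thesis using True by simp
  next
    case False
    then show ?thesis using order_trans[OF abs_ge_zero num[of z]] tail_det_pos[OF b] by simp
  qed
  then show "AE z in dF. norm (indicator {..b} z * (\<phi> z * r z / tail_det z))
      \<le> norm ((A * \<bar>\<phi> z\<bar> + B * \<bar>\<phi> z * \<psi> z\<bar>) / tail_det b)"
    unfolding real_norm_def by (intro AE_I2 order_trans[OF _ abs_ge_self])
qed

lemma dens_head_integrable:
  assumes "\<phi> \<in> L2set dF" "b \<in> below_top"
  shows "integrable dF (\<lambda>z. indicator {..b} z * dens1 \<phi> z)" "integrable dF (\<lambda>z. indicator {..b} z * dens2 \<phi> z)"
proof -
  have bound1: "\<bar>tail_info z - tail_score z * \<psi> z\<bar> \<le> (LINT x|dF. (\<psi> x)^2) + (LINT x|dF. \<bar>\<psi> x\<bar>) * \<bar>\<psi> z\<bar>" for z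
  proof -
    have "\<bar>tail_info z - tail_score z * \<psi> z\<bar> \<le> \<bar>tail_info z\<bar> + \<bar>tail_score z\<bar> * \<bar>\<psi> z\<bar>"
      by (metis abs_mult abs_triangle_ineq4)
    then show ?thesis
      using tail_info_nonneg[of z] tail_info_le[of z] mult_right_mono[OF abs_tail_score_le[of z] abs_ge_zero, of "\<psi> z"]
      by simp
  qed
  show "integrable dF (\<lambda>z. indicator {..b} z * dens1 \<phi> z)"
    unfolding dens1_def by (rule head_integrable_weighted[OF assms _ bound1]) simp
  have bound2: "\<bar>tail_mass z * \<psi> z - tail_score z\<bar> \<le> (LINT x|dF. \<bar>\<psi> x\<bar>) + 1 * \<bar>\<psi> z\<bar>" for z
  proof -
    have "\<bar>tail_mass z * \<psi> z - tail_score z\<bar> \<le> tail_mass z * \<bar>\<psi> z\<bar> + \<bar>tail_score z\<bar>"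
      using tail_mass_nonneg[of z] by (metis abs_mult abs_of_nonneg abs_triangle_ineq4)
    then show ?thesis
      using mult_right_mono[OF tail_mass_le_1 abs_ge_zero, of z "\<psi> z"] abs_tail_score_le[of z] by simp
  qed
  show "integrable dF (\<lambda>z. indicator {..b} z * dens2 \<phi> z)"
    unfolding dens2_def by (rule head_integrable_weighted[OF assms _ bound2]) simp
qed

lemma abs_head_comp_le:
  assumes "\<phi> \<in> L2set dF" "b \<in> below_top"
  shows "\<bar>indicator {..b} z * comp1 \<phi> z\<bar> \<le> (LINT s|dF. \<bar>indicator {..b} s * dens1 \<phi> s\<bar>)"
    and "\<bar>indicator {..b} z * comp2 \<phi> z\<bar> \<le> (LINT s|dF. \<bar>indicator {..b} s * dens2 \<phi> s\<bar>)"
  unfolding comp1_def comp2_def by (intro abs_head_integral_le dens_head_integrable[OF assms])+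

lemma head_comp_L2set:
  assumes \<phi>: "\<phi> \<in> L2set dF" and b: "b \<in> below_top"
  shows "(\<lambda>z. indicator {..b} z * comp1 \<phi> z) \<in> L2set dF" "(\<lambda>z. indicator {..b} z * comp2 \<phi> z) \<in> L2set dF"
proof -
  have [measurable]: "\<phi> \<in> borel_measurable borel" using \<phi> by (simp add: L2set_def)
  show "(\<lambda>z. indicator {..b} z * comp1 \<phi> z) \<in> L2set dF" "(\<lambda>z. indicator {..b} z * comp2 \<phi> z) \<in> L2set dF"
    by (rule L2set_bounded[OF _ abs_head_comp_le(1)[OF \<phi> b]] L2set_bounded[OF _ abs_head_comp_le(2)[OF \<phi> b]];
        simp)+
qed

lemma head_innov_L2set:
  assumes \<phi>: "\<phi> \<in> L2set dF" and b: "b \<in> below_top"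
  shows "(\<lambda>z. indicator {..b} z * innov \<phi> z) \<in> L2set dF"
proof -
  have [measurable]: "\<phi> \<in> borel_measurable borel" using \<phi> by (simp add: L2set_def)
  have "(\<lambda>z. indicator {..b} z * \<phi> z) \<in> L2set dF"
    by (rule L2set_bounded_mult[OF \<phi>, of _ 1]) auto
  moreover have "(\<lambda>z. (indicator {..b} z * comp2 \<phi> z) * \<psi> z) \<in> L2set dF"
    by (rule L2set_bounded_mult[OF score_L2set _ abs_head_comp_le(2)[OF \<phi> b]]) simp
  ultimately have "(\<lambda>z. indicator {..b} z * \<phi> z - (indicator {..b} z * comp1 \<phi> z
      + (indicator {..b} z * comp2 \<phi> z) * \<psi> z)) \<in> L2set dF"
    using head_comp_L2set[OF \<phi> b] by (intro L2set_diff L2set_add)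
  then show ?thesis by (simp add: innov_def algebra_simps)
qed

lemma head_integral_innov_times:
  assumes \<phi>: "\<phi> \<in> L2set dF" and b: "b \<in> below_top"
    and k: "k \<in> L2set dF" and k\<psi>: "integrable dF (\<lambda>z. k z * \<psi> z)"
    and T0: "\<And>s. T0 s = (LINT x|dF. indicator {s..} x * k x)"
    and T1: "\<And>s. T1 s = (LINT x|dF. indicator {s..} x * (k x * \<psi> x))"
    and Gam_row: "\<And>s. s \<in> below_top \<Longrightarrow> dens1 \<phi> s * T0 s + dens2 \<phi> s * T1 s = k s * \<phi> s"
  shows "(LINT z|dF. indicator {..b} z * k z * innov \<phi> z) = T0 b * comp1 \<phi> b + T1 b * comp2 \<phi> b"
proof -
  have [measurable]: "\<phi> \<in> borel_measurable borel" "k \<in> borel_measurable borel"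
    using \<phi> k by (auto simp: L2set_def)
  have k_int: "integrable dF k" by (rule L2set_integrable[OF k])
  note d = dens_head_integrable[OF \<phi> b]
  note c = abs_head_comp_le[OF \<phi> b]
  have T_borel: "T0 \<in> borel_measurable borel" "T1 \<in> borel_measurable borel"
    unfolding T0[abs_def] T1[abs_def] by (intro borel_measurable_tail_integral; simp)+
  have T_bound: "\<bar>T0 s\<bar> \<le> (LINT x|dF. \<bar>k x\<bar>)" "\<bar>T1 s\<bar> \<le> (LINT x|dF. \<bar>k x * \<psi> x\<bar>)" for s
    unfolding T0 T1 by (intro abs_set_integral_le_integral_abs k_int k\<psi>; simp)+
  have swap1: "(LINT z|dF. indicator {..b} z * k z * comp1 \<phi> z)
      = (LINT s|dF. indicator {..b} s * dens1 \<phi> s * T0 s) - T0 b * comp1 \<phi> b"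
    using integral_head_integral_swap_tail[OF k_int d(1)] unfolding comp1_def T0 by simp
  have swap2: "(LINT z|dF. indicator {..b} z * (k z * \<psi> z) * comp2 \<phi> z)
      = (LINT s|dF. indicator {..b} s * dens2 \<phi> s * T1 s) - T1 b * comp2 \<phi> b"
    using integral_head_integral_swap_tail[OF k\<psi> d(2)] unfolding comp2_def T1 by simp
  have "(LINT s|dF. indicator {..b} s * dens1 \<phi> s * T0 s) + (LINT s|dF. indicator {..b} s * dens2 \<phi> s * T1 s)
      = (LINT s|dF. indicator {..b} s * dens1 \<phi> s * T0 s + indicator {..b} s * dens2 \<phi> s * T1 s)"
    using integrable_bounded_mult[OF d(1) _ T_bound(1)] integrable_bounded_mult[OF d(2) _ T_bound(2)] T_borel
    by (simp add: mult.commute)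
  also have "\<dots> = (LINT s|dF. indicator {..b} s * (k s * \<phi> s))"
  proof (rule Bochner_Integration.integral_cong[OF refl])
    fix s
    show "indicator {..b} s * dens1 \<phi> s * T0 s + indicator {..b} s * dens2 \<phi> s * T1 s
        = indicator {..b} s * (k s * \<phi> s)"
      using Gam_row[OF below_top_downward[OF _ b], of s] by (cases "s \<le> b") (auto simp: algebra_simps)
  qed
  finally have row: "(LINT s|dF. indicator {..b} s * dens1 \<phi> s * T0 s) + (LINT s|dF. indicator {..b} s * dens2 \<phi> s * T1 s)
      = (LINT s|dF. indicator {..b} s * (k s * \<phi> s))" .
  have "(LINT z|dF. indicator {..b} z * k z * innov \<phi> z)
      = (LINT z|dF. indicator {..b} z * (k z * \<phi> z) - k z * (indicator {..b} z * comp1 \<phi> z)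
          - (k z * \<psi> z) * (indicator {..b} z * comp2 \<phi> z))"
    by (intro Bochner_Integration.integral_cong) (auto simp: innov_def algebra_simps)
  also have "\<dots> = (LINT z|dF. indicator {..b} z * (k z * \<phi> z)) - (LINT z|dF. indicator {..b} z * k z * comp1 \<phi> z)
      - (LINT z|dF. indicator {..b} z * (k z * \<psi> z) * comp2 \<phi> z)"
    using integrable_indicator_times[OF _ L2set_integrable_mult[OF k \<phi>], of "{..b}"]
      integrable_bounded_mult[OF k_int _ c(1)] integrable_bounded_mult[OF k\<psi> _ c(2)]
    by (simp add: mult_ac)
  finally show ?thesis using row unfolding swap1 swap2 by simp
qed

lemma head_integral_innov:
  assumes \<phi>: "\<phi> \<in> L2set dF" and b: "b \<in> below_top"
  shows "(LINT z|dF. indicator {..b} z * innov \<phi> z) = tail_mass b * comp1 \<phi> b + tail_score b * comp2 \<phi> b"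
    and "(LINT z|dF. indicator {..b} z * \<psi> z * innov \<phi> z) = tail_score b * comp1 \<phi> b + tail_info b * comp2 \<phi> b"
proof -
  show "(LINT z|dF. indicator {..b} z * innov \<phi> z) = tail_mass b * comp1 \<phi> b + tail_score b * comp2 \<phi> b"
    using head_integral_innov_times[OF \<phi> b, of "\<lambda>_. 1" tail_mass tail_score] Gam_times_dens(1)[of _ \<phi>]
      L2set_bounded[of "\<lambda>_. 1" 1] score_integrable
    by (simp add: tail_mass_def tail_score_def)
  show "(LINT z|dF. indicator {..b} z * \<psi> z * innov \<phi> z) = tail_score b * comp1 \<phi> b + tail_info b * comp2 \<phi> b"
    using head_integral_innov_times[OF \<phi> b score_L2set _, of tail_score tail_info] Gam_times_dens(2)[of _ \<phi>]
      fisher_int by (simp add: tail_score_def tail_info_def power2_eq_square mult.commute)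
qed

(* u(b)^T Gam(b) u(b) for the vector u = (comp1 \<phi> b, comp2 \<phi> b). *)
definition comp_energy :: "(real \<Rightarrow> real) \<Rightarrow> real \<Rightarrow> real" where
  "comp_energy \<phi> b = quad2 (tail_mass b) (tail_score b) (tail_info b) (comp1 \<phi> b) (comp2 \<phi> b)"

lemma comp_energy_nonneg: "0 \<le> comp_energy \<phi> b"
  unfolding comp_energy_def by (rule quad2_nonneg[OF tail_mass_nonneg tail_info_nonneg tail_score_square_le])

lemma head_integral_innov_times_compensator:
  assumes \<phi>: "\<phi> \<in> L2set dF" and b: "b \<in> below_top"
  shows "(LINT z|dF. indicator {..b} z * innov \<phi> z * (comp1 \<phi> z + comp2 \<phi> z * \<psi> z))
       = comp_energy \<phi> b - (LINT z|dF. indicator {..b} z * \<phi> z * (comp1 \<phi> z + comp2 \<phi> z * \<psi> z))"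
proof -
  define V1 where "V1 s = tail_mass s * comp1 \<phi> s + tail_score s * comp2 \<phi> s" for s
  define V2 where "V2 s = tail_score s * comp1 \<phi> s + tail_info s * comp2 \<phi> s" for s
  have [measurable]: "\<phi> \<in> borel_measurable borel" using \<phi> by (simp add: L2set_def)
  have L: "(\<lambda>z. indicator {..b} z * innov \<phi> z) \<in> L2set dF" by (rule head_innov_L2set[OF \<phi> b])
  have C2: "(\<lambda>z. (indicator {..b} z * comp2 \<phi> z) * \<psi> z) \<in> L2set dF"
    by (rule L2set_bounded_mult[OF score_L2set _ abs_head_comp_le(2)[OF \<phi> b]]) simp
  note d = dens_head_integrable[OF \<phi> b]
  have Lint: "integrable dF (\<lambda>z. indicator {..b} z * innov \<phi> z)"
    "integrable dF (\<lambda>z. indicator {..b} z * (\<psi> z * innov \<phi> z))"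
    using L2set_integrable[OF L] L2set_integrable_mult[OF L score_L2set] by (simp_all add: mult_ac)
  have V1: "\<And>s. s \<le> b \<Longrightarrow> (LINT x|dF. indicator {..s} x * innov \<phi> x) = V1 s"
    and V2: "\<And>s. s \<le> b \<Longrightarrow> (LINT x|dF. indicator {..s} x * (\<psi> x * innov \<phi> x)) = V2 s"
    using head_integral_innov[OF \<phi> below_top_downward[OF _ b]] by (simp_all add: V1_def V2_def mult_ac)
  note H1 = head_integral_times_head_integral[OF Lint(1) d(1) V1]
  note H2 = head_integral_times_head_integral[OF Lint(2) d(2) V2]
  have "(\<lambda>z. (indicator {..b} z * innov \<phi> z) * (indicator {..b} z * comp1 \<phi> z))
      = (\<lambda>z. indicator {..b} z * innov \<phi> z * comp1 \<phi> z)"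
    "(\<lambda>z. (indicator {..b} z * innov \<phi> z) * ((indicator {..b} z * comp2 \<phi> z) * \<psi> z))
      = (\<lambda>z. indicator {..b} z * (\<psi> z * innov \<phi> z) * comp2 \<phi> z)"
    by (auto simp: fun_eq_iff indicator_def)
  then have "integrable dF (\<lambda>z. indicator {..b} z * innov \<phi> z * comp1 \<phi> z)"
    "integrable dF (\<lambda>z. indicator {..b} z * (\<psi> z * innov \<phi> z) * comp2 \<phi> z)"
    using L2set_integrable_mult[OF L head_comp_L2set(1)[OF \<phi> b]] L2set_integrable_mult[OF L C2] by simp_all
  then have "(LINT z|dF. indicator {..b} z * innov \<phi> z * (comp1 \<phi> z + comp2 \<phi> z * \<psi> z))
      = V1 b * comp1 \<phi> b + V2 b * comp2 \<phi> b
      - ((LINT s|dF. indicator {..b} s * dens1 \<phi> s * V1 s) + (LINT s|dF. indicator {..b} s * dens2 \<phi> s * V2 s))"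
    using H1(2) H2(2) by (simp add: comp1_def comp2_def algebra_simps)
  also have "V1 b * comp1 \<phi> b + V2 b * comp2 \<phi> b = comp_energy \<phi> b"
    by (simp add: V1_def V2_def comp_energy_def quad2_def power2_eq_square algebra_simps)
  also have "(LINT s|dF. indicator {..b} s * dens1 \<phi> s * V1 s) + (LINT s|dF. indicator {..b} s * dens2 \<phi> s * V2 s)
      = (LINT s|dF. indicator {..b} s * \<phi> s * (comp1 \<phi> s + comp2 \<phi> s * \<psi> s))"
  proof -
    have row: "dens1 \<phi> s * V1 s + dens2 \<phi> s * V2 s = \<phi> s * (comp1 \<phi> s + comp2 \<phi> s * \<psi> s)"
      if "s \<in> below_top" for s
    proof -
      have "dens1 \<phi> s * V1 s + dens2 \<phi> s * V2 s
          = comp1 \<phi> s * (dens1 \<phi> s * tail_mass s + dens2 \<phi> s * tail_score s)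
            + comp2 \<phi> s * (dens1 \<phi> s * tail_score s + dens2 \<phi> s * tail_info s)"
        unfolding V1_def V2_def by (simp add: algebra_simps)
      then show ?thesis unfolding Gam_times_dens[OF that] by (simp add: algebra_simps)
    qed
    have "indicator {..b} s * dens1 \<phi> s * V1 s + indicator {..b} s * dens2 \<phi> s * V2 s
        = indicator {..b} s * \<phi> s * (comp1 \<phi> s + comp2 \<phi> s * \<psi> s)" for s
      using row[OF below_top_downward[OF _ b], of s] by (cases "s \<le> b") (simp_all add: algebra_simps)
    then show ?thesis using Bochner_Integration.integral_add[OF H1(1) H2(1)] by simp
  qed
  finally show ?thesis .
qed

lemma head_integral_innov_square:
  assumes \<phi>: "\<phi> \<in> L2set dF" and b: "b \<in> below_top"
  shows "(LINT z|dF. indicator {..b} z * (innov \<phi> z)^2)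
       = (LINT z|dF. indicator {..b} z * (\<phi> z)^2) - comp_energy \<phi> b"
proof -
  define I where "I z = (indicator {..b} z :: real)" for z
  define c where "c z = comp1 \<phi> z + comp2 \<phi> z * \<psi> z" for z
  have [measurable]: "\<phi> \<in> borel_measurable borel" using \<phi> by (simp add: L2set_def)
  have L: "(\<lambda>z. I z * innov \<phi> z) \<in> L2set dF" unfolding I_def by (rule head_innov_L2set[OF \<phi> b])
  have P: "(\<lambda>z. I z * \<phi> z) \<in> L2set dF" unfolding I_def by (rule L2set_bounded_mult[OF \<phi>, of _ 1]) auto
  have C2: "(\<lambda>z. (I z * comp2 \<phi> z) * \<psi> z) \<in> L2set dF"
    unfolding I_def by (rule L2set_bounded_mult[OF score_L2set _ abs_head_comp_le(2)[OF \<phi> b]]) simp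
  have C: "(\<lambda>z. I z * c z) \<in> L2set dF"
    using L2set_add[OF head_comp_L2set(1)[OF \<phi> b] C2] by (simp add: I_def c_def algebra_simps)
  have idem: "(LINT z|dF. (I z * g z) * (I z * c z)) = (LINT z|dF. indicator {..b} z * g z * c z)" for g
    by (intro Bochner_Integration.integral_cong) (auto simp: I_def indicator_def)
  have "(LINT z|dF. indicator {..b} z * (innov \<phi> z)^2)
      = (LINT z|dF. (I z * \<phi> z) * (I z * \<phi> z) - (I z * \<phi> z) * (I z * c z) - (I z * innov \<phi> z) * (I z * c z))"
    by (intro Bochner_Integration.integral_cong)
      (auto simp: I_def c_def innov_def indicator_def power2_eq_square algebra_simps)
  also have "\<dots> = (LINT z|dF. (I z * \<phi> z) * (I z * \<phi> z)) - (LINT z|dF. (I z * \<phi> z) * (I z * c z))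
      - (LINT z|dF. (I z * innov \<phi> z) * (I z * c z))"
    using L2set_integrable_mult[OF P P] L2set_integrable_mult[OF P C] L2set_integrable_mult[OF L C] by simp
  also have "(LINT z|dF. (I z * \<phi> z) * (I z * \<phi> z)) = (LINT z|dF. indicator {..b} z * (\<phi> z)^2)"
    by (intro Bochner_Integration.integral_cong) (auto simp: I_def indicator_def power2_eq_square)
  also have "(LINT z|dF. (I z * \<phi> z) * (I z * c z)) = (LINT z|dF. indicator {..b} z * \<phi> z * c z)"
    by (rule idem)
  also have "(LINT z|dF. (I z * innov \<phi> z) * (I z * c z)) = (LINT z|dF. indicator {..b} z * innov \<phi> z * c z)"
    by (rule idem)
  finally show ?thesis
    using head_integral_innov_times_compensator[OF \<phi> b] unfolding c_def by simp
qed

lemma comp_energy_le_head: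
  assumes "\<phi> \<in> L2set dF" "b \<in> below_top"
  shows "comp_energy \<phi> b \<le> (LINT z|dF. indicator {..b} z * (\<phi> z)^2)"
proof -
  have "0 \<le> (LINT z|dF. indicator {..b} z * (innov \<phi> z)^2)" by (intro integral_nonneg_AE) auto
  then show ?thesis using head_integral_innov_square[OF assms] by simp
qed

lemma comp_truncate:
  assumes \<phi>: "\<phi> \<in> L2set dF" and c: "c \<in> below_top" and y0: "y0 \<le> c"
  shows "comp1 (\<lambda>x. indicator {y0<..} x * \<phi> x) c = comp1 \<phi> c - comp1 \<phi> y0"
    and "comp2 (\<lambda>x. indicator {y0<..} x * \<phi> x) c = comp2 \<phi> c - comp2 \<phi> y0"
proof -
  have y0_below: "y0 \<in> below_top" by (rule below_top_downward[OF y0 c])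
  have trunc: "(LINT z|dF. indicator {..c} z * (indicator {y0<..} z * g z))
      = (LINT z|dF. indicator {..c} z * g z) - (LINT z|dF. indicator {..y0} z * g z)"
    if "integrable dF (\<lambda>z. indicator {..c} z * g z)" "integrable dF (\<lambda>z. indicator {..y0} z * g z)"
    for g :: "real \<Rightarrow> real"
  proof -
    have "(\<lambda>z. indicator {..c} z * (indicator {y0<..} z * g z))
        = (\<lambda>z. indicator {..c} z * g z - indicator {..y0} z * g z)"
      using y0 by (auto simp: fun_eq_iff indicator_def)
    then show ?thesis using that by simp
  qed
  have "dens1 (\<lambda>x. indicator {y0<..} x * \<phi> x) z = indicator {y0<..} z * dens1 \<phi> z"
    "dens2 (\<lambda>x. indicator {y0<..} x * \<phi> x) z = indicator {y0<..} z * dens2 \<phi> z" for z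
    by (simp_all add: dens1_def dens2_def)
  then show "comp1 (\<lambda>x. indicator {y0<..} x * \<phi> x) c = comp1 \<phi> c - comp1 \<phi> y0"
    "comp2 (\<lambda>x. indicator {y0<..} x * \<phi> x) c = comp2 \<phi> c - comp2 \<phi> y0"
    unfolding comp1_def comp2_def
    by (simp_all add: trunc dens_head_integrable[OF \<phi> c] dens_head_integrable[OF \<phi> y0_below])
qed

lemma comp_energy_le_split:
  assumes \<phi>: "\<phi> \<in> L2set dF" and b: "b \<in> below_top" and y0: "y0 \<le> b"
  shows "comp_energy \<phi> b \<le> 2 * (LINT x|dF. indicator {y0..} x * (\<phi> x)^2)
      + 2 * quad2 (tail_mass b) (tail_score b) (tail_info b) (comp1 \<phi> y0) (comp2 \<phi> y0)"
proof -
  define \<phi>' where "\<phi>' = (\<lambda>x. indicator {y0<..} x * \<phi> x)"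
  have \<phi>': "\<phi>' \<in> L2set dF" unfolding \<phi>'_def by (rule L2set_bounded_mult[OF \<phi>, of _ 1]) auto
  note psd = tail_mass_nonneg tail_info_nonneg tail_score_square_le
  have "comp_energy \<phi> b \<le> 2 * quad2 (tail_mass b) (tail_score b) (tail_info b)
        (comp1 \<phi> b - comp1 \<phi> y0) (comp2 \<phi> b - comp2 \<phi> y0)
      + 2 * quad2 (tail_mass b) (tail_score b) (tail_info b) (comp1 \<phi> y0) (comp2 \<phi> y0)"
    using quad2_add_le[OF psd, of b "comp1 \<phi> b - comp1 \<phi> y0" "comp1 \<phi> y0" "comp2 \<phi> b - comp2 \<phi> y0" "comp2 \<phi> y0"]
    by (simp add: comp_energy_def)
  also have "quad2 (tail_mass b) (tail_score b) (tail_info b) (comp1 \<phi> b - comp1 \<phi> y0) (comp2 \<phi> b - comp2 \<phi> y0)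
      = comp_energy \<phi>' b"
    by (simp add: comp_energy_def \<phi>'_def comp_truncate[OF \<phi> b y0])
  also have "comp_energy \<phi>' b \<le> (LINT x|dF. indicator {..b} x * (\<phi>' x)^2)"
    by (rule comp_energy_le_head[OF \<phi>' b])
  also have "\<dots> \<le> (LINT x|dF. indicator {y0..} x * (\<phi> x)^2)"
  proof (rule integral_mono)
    show "integrable dF (\<lambda>x. indicator {..b} x * (\<phi>' x)^2)"
      using \<phi>' by (intro integrable_indicator_times) (auto simp: L2set_def)
    show "integrable dF (\<lambda>x. indicator {y0..} x * (\<phi> x)^2)"
      using \<phi> by (intro integrable_indicator_times) (auto simp: L2set_def)
  qed (auto simp: \<phi>'_def indicator_def)
  finally show ?thesis by simp
qed

lemma comp_energy_tendsto_0:
  assumes \<phi>: "\<phi> \<in> L2set dF" and b: "incseq b" "\<And>n. b n \<in> below_top" "AE x in dF. \<exists>n. x < b n"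
  shows "(\<lambda>n. comp_energy \<phi> (b n)) \<longlonglongrightarrow> 0"
proof (rule order_tendstoI)
  fix a :: real assume "a < 0"
  then show "eventually (\<lambda>n. a < comp_energy \<phi> (b n)) sequentially"
    using comp_energy_nonneg by (intro always_eventually) (auto intro: less_le_trans)
next
  fix \<epsilon> :: real assume \<epsilon>: "0 < \<epsilon>"
  have "(\<lambda>n. LINT x|dF. indicator {b n..} x * (\<phi> x)^2) \<longlonglongrightarrow> 0"
    using \<phi> by (intro tail_integral_tendsto_0[OF b(1,3)]) (simp add: L2set_def)
  then have "eventually (\<lambda>n. (LINT x|dF. indicator {b n..} x * (\<phi> x)^2) < \<epsilon>/4) sequentially"
    using \<epsilon> by (intro order_tendstoD) auto
  then obtain N where "\<forall>n\<ge>N. (LINT x|dF. indicator {b n..} x * (\<phi> x)^2) < \<epsilon>/4"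
    unfolding eventually_sequentially by blast
  then have N: "(LINT x|dF. indicator {b N..} x * (\<phi> x)^2) < \<epsilon>/4" by blast
  define w1 where "w1 = comp1 \<phi> (b N)"
  define w2 where "w2 = comp2 \<phi> (b N)"
  have "(\<lambda>n. quad2 (tail_mass (b n)) (tail_score (b n)) (tail_info (b n)) w1 w2) \<longlonglongrightarrow> quad2 0 0 0 w1 w2"
    unfolding quad2_def using tail_moments_tendsto_0[OF b(1,3)] by (intro tendsto_intros)
  then have "eventually (\<lambda>n. quad2 (tail_mass (b n)) (tail_score (b n)) (tail_info (b n)) w1 w2 < \<epsilon>/4) sequentially"
    using \<epsilon> by (intro order_tendstoD) (auto simp: quad2_def)
  moreover have "eventually (\<lambda>n. N \<le> n) sequentially" by (rule eventually_ge_at_top)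
  ultimately show "eventually (\<lambda>n. comp_energy \<phi> (b n) < \<epsilon>) sequentially"
  proof eventually_elim
    case (elim n)
    have "comp_energy \<phi> (b n) \<le> 2 * (LINT x|dF. indicator {b N..} x * (\<phi> x)^2)
        + 2 * quad2 (tail_mass (b n)) (tail_score (b n)) (tail_info (b n)) w1 w2"
      unfolding w1_def w2_def by (rule comp_energy_le_split[OF \<phi> b(2) incseqD[OF b(1) elim(2)]])
    then show ?case using N elim(1) by simp
  qed
qed

lemma innov_L2set_norm:
  assumes \<phi>: "\<phi> \<in> L2set dF"
  shows "innov \<phi> \<in> L2set dF" and "(LINT y|dF. (innov \<phi> y)^2) = (LINT y|dF. (\<phi> y)^2)"
proof -
  obtain b where b: "incseq b" "\<And>n. b n \<in> below_top" "AE x in dF. \<exists>n. x < b n"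
    using exhausting_sequence_below_top by blast
  have [measurable]: "\<phi> \<in> borel_measurable borel" using \<phi> by (simp add: L2set_def)
  let ?f = "\<lambda>n x. indicator {..b n} x * (innov \<phi> x)^2"
  have f_int: "integrable dF (?f n)" for n
  proof -
    have "(\<lambda>x. (indicator {..b n} x * innov \<phi> x)^2) = ?f n"
      by (auto simp: fun_eq_iff indicator_def)
    then show ?thesis using head_innov_L2set[OF \<phi> b(2)[of n]] by (simp add: L2set_def)
  qed
  have f_mono: "AE x in dF. mono (\<lambda>n. ?f n x)"
    using b(1) by (intro AE_I2 monoI) (auto simp: indicator_def incseq_def dest: order_trans)
  have f_lim: "AE x in dF. (\<lambda>n. ?f n x) \<longlonglongrightarrow> (innov \<phi> x)^2"
    using b(3)
  proof eventually_elim
    fix x assume "\<exists>n. x < b n"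
    then obtain n where n: "x < b n" by blast
    have "?f m x = (innov \<phi> x)^2" if "n \<le> m" for m
      using n incseqD[OF b(1) that] by (simp add: indicator_def)
    then show "(\<lambda>n. ?f n x) \<longlonglongrightarrow> (innov \<phi> x)^2"
      by (intro tendsto_eventually eventually_sequentiallyI)
  qed
  have "(\<lambda>n. (LINT x|dF. indicator {..b n} x * (\<phi> x)^2) - comp_energy \<phi> (b n)) \<longlonglongrightarrow> (LINT x|dF. (\<phi> x)^2) - 0"
    using \<phi> by (intro tendsto_diff head_integral_tendsto[OF b(1,3)] comp_energy_tendsto_0[OF \<phi> b])
      (simp add: L2set_def)
  then have integral_lim: "(\<lambda>n. integral\<^sup>L dF (?f n)) \<longlonglongrightarrow> (LINT x|dF. (\<phi> x)^2)"
    using head_integral_innov_square[OF \<phi> b(2)] by simp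
  have "integrable dF (\<lambda>x. (innov \<phi> x)^2)"
    by (rule integrable_monotone_convergence[OF f_int f_mono f_lim integral_lim]) simp
  then show "innov \<phi> \<in> L2set dF" by (simp add: L2set_def)
  show "(LINT y|dF. (innov \<phi> y)^2) = (LINT y|dF. (\<phi> y)^2)"
    by (rule integral_monotone_convergence[OF f_int f_mono f_lim integral_lim]) simp
qed

lemma innov_orthogonal:
  assumes \<phi>: "\<phi> \<in> L2set dF"
  shows "(LINT y|dF. innov \<phi> y) = 0" and "(LINT y|dF. \<psi> y * innov \<phi> y) = 0"
proof -
  obtain b where b: "incseq b" "\<And>n. b n \<in> below_top" "AE x in dF. \<exists>n. x < b n"
    using exhausting_sequence_below_top by blast
  note E = comp_energy_tendsto_0[OF \<phi> b]
  note innov = innov_L2set_norm(1)[OF \<phi>]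
  note psd = tail_score_square_le
  have "(\<lambda>n. tail_mass (b n) * comp1 \<phi> (b n) + tail_score (b n) * comp2 \<phi> (b n)) \<longlonglongrightarrow> 0"
  proof (rule tendsto_0_of_square_le[OF _ E])
    show "(tail_mass (b n) * comp1 \<phi> (b n) + tail_score (b n) * comp2 \<phi> (b n))^2 \<le> 1 * comp_energy \<phi> (b n)" for n
      using quad2_row1_le[OF psd] mult_right_mono[OF tail_mass_le_1 comp_energy_nonneg]
      unfolding comp_energy_def by (blast intro: order_trans)
  qed
  moreover have "(\<lambda>n. LINT x|dF. indicator {..b n} x * innov \<phi> x) \<longlonglongrightarrow> (LINT x|dF. innov \<phi> x)"
    by (rule head_integral_tendsto[OF b(1,3) L2set_integrable[OF innov]])
  ultimately show "(LINT y|dF. innov \<phi> y) = 0"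
    using head_integral_innov(1)[OF \<phi> b(2)] LIMSEQ_unique by auto
  have "(\<lambda>n. tail_score (b n) * comp1 \<phi> (b n) + tail_info (b n) * comp2 \<phi> (b n)) \<longlonglongrightarrow> 0"
  proof (rule tendsto_0_of_square_le[OF _ E])
    show "(tail_score (b n) * comp1 \<phi> (b n) + tail_info (b n) * comp2 \<phi> (b n))^2
        \<le> (LINT x|dF. (\<psi> x)^2) * comp_energy \<phi> (b n)" for n
      using quad2_row2_le[OF psd] mult_right_mono[OF tail_info_le comp_energy_nonneg]
      unfolding comp_energy_def by (blast intro: order_trans)
  qed
  moreover have "(\<lambda>n. LINT x|dF. indicator {..b n} x * (\<psi> x * innov \<phi> x)) \<longlonglongrightarrow> (LINT x|dF. \<psi> x * innov \<phi> x)"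
    by (rule head_integral_tendsto[OF b(1,3) L2set_integrable_mult[OF score_L2set innov]])
  ultimately show "(LINT y|dF. \<psi> y * innov \<phi> y) = 0"
    using head_integral_innov(2)[OF \<phi> b(2)] LIMSEQ_unique by (auto simp: mult.assoc)
qed

lemma hvec_eq: "hvec f f' y = vector [1, 0] + \<psi> y *\<^sub>R vector [0, 1]"
  by (simp add: hvec_def vec_eq_iff forall_2)

lemma Lop_integrand_eq:
  "\<phi> z *\<^sub>R (hvec f f' z v* matrix_inv (Gam f f' z))
    = (if z \<in> below_top then dens1 \<phi> z *\<^sub>R vector [1, 0] + dens2 \<phi> z *\<^sub>R vector [0, 1]
       else \<phi> z *\<^sub>R (matrix_inv (0::real^2^2) $ 1 + \<psi> z *\<^sub>R matrix_inv (0::real^2^2) $ 2))"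
proof (cases "z \<in> below_top")
  case True
  have "det (Gam f f' z) \<noteq> 0" using tail_det_pos[OF True] by (simp add: det_Gam)
  with True show ?thesis
    by (simp add: vec_eq_iff forall_2 vector_matrix_mult_def sum_2 hvec_def matrix_inv_2x2
        Gam_entries det_Gam dens1_def dens2_def field_simps)
next
  case False
  then show ?thesis
    by (simp add: Gam_eq_0 vec_eq_iff forall_2 vector_matrix_mult_def sum_2 hvec_def)
qed

lemma Lop_borel [measurable]:
  assumes [measurable]: "\<phi> \<in> borel_measurable borel"
  shows "Lop f f' \<phi> \<in> borel_measurable borel"
proof -
  have "(\<lambda>z. \<phi> z *\<^sub>R (hvec f f' z v* matrix_inv (Gam f f' z))) \<in> borel_measurable borel"
    unfolding Lop_integrand_eq by measurable
  from borel_measurable_head_integral[OF this] show ?thesis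
    unfolding Lop_def[abs_def] set_lebesgue_integral_def hvec_eq by measurable
qed

lemma Lop_eq_innov:
  assumes \<phi>: "\<phi> \<in> L2set dF" and y: "y \<in> below_top"
  shows "Lop f f' \<phi> y = innov \<phi> y"
proof -
  have "indicator {..y} z *\<^sub>R (\<phi> z *\<^sub>R (hvec f f' z v* matrix_inv (Gam f f' z)))
      = (indicator {..y} z * dens1 \<phi> z) *\<^sub>R vector [1, 0] + (indicator {..y} z * dens2 \<phi> z) *\<^sub>R vector [0, 1]" for z
    using below_top_downward[OF _ y, of z] by (cases "z \<le> y") (simp_all add: Lop_integrand_eq)
  then have "(LINT z:{..y}|dF. \<phi> z *\<^sub>R (hvec f f' z v* matrix_inv (Gam f f' z)))
      = comp1 \<phi> y *\<^sub>R vector [1, 0] + comp2 \<phi> y *\<^sub>R vector [0, 1]"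
    using dens_head_integrable[OF \<phi> y] by (simp add: set_lebesgue_integral_def comp1_def comp2_def)
  then show ?thesis by (simp add: Lop_def innov_def hvec_eq inner_vec_def sum_2 algebra_simps)
qed

lemma Lop_eq_innov_AE: "\<phi> \<in> L2set dF \<Longrightarrow> AE y in dF. Lop f f' \<phi> y = innov \<phi> y"
  using AE_below_top by eventually_elim (rule Lop_eq_innov)

lemma Lop_L2set_norm:
  assumes \<phi>: "\<phi> \<in> L2set dF"
  shows "Lop f f' \<phi> \<in> L2set dF" and "(LINT y|dF. (Lop f f' \<phi> y)^2) = (LINT y|dF. (\<phi> y)^2)"
proof -
  have [measurable]: "\<phi> \<in> borel_measurable borel" using \<phi> by (simp add: L2set_def)
  have AE: "AE y in dF. (Lop f f' \<phi> y)^2 = (innov \<phi> y)^2"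
    using Lop_eq_innov_AE[OF \<phi>] by eventually_elim simp
  show "Lop f f' \<phi> \<in> L2set dF"
    using innov_L2set_norm(1)[OF \<phi>] integrable_cong_AE[OF _ _ AE] by (simp add: L2set_def)
  show "(LINT y|dF. (Lop f f' \<phi> y)^2) = (LINT y|dF. (\<phi> y)^2)"
    using integral_cong_AE[OF _ _ AE] innov_L2set_norm(2)[OF \<phi>] by simp
qed

lemma Lop_orthogonal:
  assumes \<phi>: "\<phi> \<in> L2set dF"
  shows "(LINT y|dF. Lop f f' \<phi> y) = 0" and "(LINT y|dF. Lop f f' \<phi> y * \<psi> y) = 0"
proof -
  have [measurable]: "\<phi> \<in> borel_measurable borel" using \<phi> by (simp add: L2set_def)
  show "(LINT y|dF. Lop f f' \<phi> y) = 0"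
    using integral_cong_AE[OF _ _ Lop_eq_innov_AE[OF \<phi>]] innov_orthogonal(1)[OF \<phi>] by simp
  have AE: "AE y in dF. Lop f f' \<phi> y * \<psi> y = \<psi> y * innov \<phi> y"
    using Lop_eq_innov_AE[OF \<phi>] by eventually_elim simp
  show "(LINT y|dF. Lop f f' \<phi> y * \<psi> y) = 0"
    using integral_cong_AE[OF _ _ AE] innov_orthogonal(2)[OF \<phi>] by simp
qed

lemma Lop_orthogonal_hvec:
  assumes \<phi>: "\<phi> \<in> L2set dF"
  shows "integrable dF (\<lambda>y. Lop f f' \<phi> y *\<^sub>R hvec f f' y)" and "(LINT y|dF. Lop f f' \<phi> y *\<^sub>R hvec f f' y) = 0"
proof -
  have L: "Lop f f' \<phi> \<in> L2set dF" by (rule Lop_L2set_norm(1)[OF \<phi>])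
  have eq: "(\<lambda>y. Lop f f' \<phi> y *\<^sub>R hvec f f' y)
      = (\<lambda>y. Lop f f' \<phi> y *\<^sub>R vector [1, 0] + (Lop f f' \<phi> y * \<psi> y) *\<^sub>R vector [0, 1])"
    by (simp add: fun_eq_iff hvec_eq scaleR_add_right)
  have "integrable dF (Lop f f' \<phi>)" "integrable dF (\<lambda>y. Lop f f' \<phi> y * \<psi> y)"
    using L2set_integrable[OF L] L2set_integrable_mult[OF L score_L2set] by auto
  then show "integrable dF (\<lambda>y. Lop f f' \<phi> y *\<^sub>R hvec f f' y)"
    and "(LINT y|dF. Lop f f' \<phi> y *\<^sub>R hvec f f' y) = 0"
    unfolding eq using Lop_orthogonal[OF \<phi>] by simp_all
qed

lemma innov_add:
  assumes \<phi>1: "\<phi>1 \<in> L2set dF" and \<phi>2: "\<phi>2 \<in> L2set dF" and y: "y \<in> below_top"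
  shows "innov (\<lambda>x. \<phi>1 x + \<phi>2 x) y = innov \<phi>1 y + innov \<phi>2 y"
proof -
  have "dens1 (\<lambda>x. \<phi>1 x + \<phi>2 x) z = dens1 \<phi>1 z + dens1 \<phi>2 z"
    "dens2 (\<lambda>x. \<phi>1 x + \<phi>2 x) z = dens2 \<phi>1 z + dens2 \<phi>2 z" for z
    by (simp_all add: dens1_def dens2_def add_divide_distrib distrib_right)
  then have "comp1 (\<lambda>x. \<phi>1 x + \<phi>2 x) y = comp1 \<phi>1 y + comp1 \<phi>2 y"
    "comp2 (\<lambda>x. \<phi>1 x + \<phi>2 x) y = comp2 \<phi>1 y + comp2 \<phi>2 y"
    using dens_head_integrable[OF \<phi>1 y] dens_head_integrable[OF \<phi>2 y]
    by (simp_all add: comp1_def comp2_def distrib_left)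
  then show ?thesis by (simp add: innov_def algebra_simps)
qed

lemma Lop_inner:
  assumes \<phi>1: "\<phi>1 \<in> L2set dF" and \<phi>2: "\<phi>2 \<in> L2set dF"
  shows "ip dF (Lop f f' \<phi>1) (Lop f f' \<phi>2) = ip dF \<phi>1 \<phi>2"
proof -
  have \<phi>12: "(\<lambda>x. \<phi>1 x + \<phi>2 x) \<in> L2set dF" by (rule L2set_add[OF \<phi>1 \<phi>2])
  note L1 = Lop_L2set_norm[OF \<phi>1] and L2 = Lop_L2set_norm[OF \<phi>2] and L12 = Lop_L2set_norm[OF \<phi>12]
  have "AE y in dF. Lop f f' (\<lambda>x. \<phi>1 x + \<phi>2 x) y = Lop f f' \<phi>1 y + Lop f f' \<phi>2 y"
    using AE_below_top Lop_eq_innov_AE[OF \<phi>1] Lop_eq_innov_AE[OF \<phi>2] Lop_eq_innov_AE[OF \<phi>12]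
    by eventually_elim (simp add: innov_add[OF \<phi>1 \<phi>2])
  then have "(LINT y|dF. (Lop f f' \<phi>1 y + Lop f f' \<phi>2 y)^2) = (LINT y|dF. (Lop f f' (\<lambda>x. \<phi>1 x + \<phi>2 x) y)^2)"
    using L1(1) L2(1) L12(1) by (intro integral_cong_AE) (auto simp: L2set_def elim!: eventually_mono)
  then have "(LINT y|dF. (Lop f f' \<phi>1 y + Lop f f' \<phi>2 y)^2) = (LINT y|dF. (\<phi>1 y + \<phi>2 y)^2)"
    using L12(2) by simp
  then show ?thesis
    unfolding ip_def integral_square_add[OF L1(1) L2(1)] integral_square_add[OF \<phi>1 \<phi>2] L1(2) L2(2) by simp
qed

lemma tensor_Lop_L2set:
  assumes "sigma_finite_measure H" "\<gamma> \<in> L2set H" "\<phi> \<in> L2set dF"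
  shows "(\<lambda>(x, y). \<gamma> x * Lop f f' \<phi> y) \<in> L2set (H \<Otimes>\<^sub>M dF)"
proof -
  interpret H: sigma_finite_measure H by fact
  interpret pair_sigma_finite H dF ..
  show ?thesis by (rule tensor_L2set[OF assms(2) Lop_L2set_norm(1)[OF assms(3)]])
qed

lemma xi_hat_tensor_Lop:
  fixes mu :: "'a \<Rightarrow> real^'q::finite"
  assumes "sigma_finite_measure H" and mu: "\<And>j. (\<lambda>x. mu x $ j) \<in> L2set H"
    and \<gamma>: "\<gamma> \<in> L2set H" and \<phi>: "\<phi> \<in> L2set dF"
  shows "xi_hat (H \<Otimes>\<^sub>M dF) dF (mfun mu \<psi>) b (\<lambda>(x, y). \<gamma> x * Lop f f' \<phi> y) \<omega>
       = b (\<lambda>(x, y). \<gamma> x * Lop f f' \<phi> y) \<omega>"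
proof (rule xi_hat_orthogonal)
  interpret H: sigma_finite_measure H by fact
  interpret pair_sigma_finite H dF ..
  show "alpha1 dF (\<lambda>(x, y). \<gamma> x * Lop f f' \<phi> y) = (\<lambda>(x, y). \<gamma> x * Lop f f' \<phi> y)"
    by (rule alpha1_tensor_centered[OF Lop_orthogonal(1)[OF \<phi>]])
  have "ip dF (Lop f f' \<phi>) \<psi> = 0" using Lop_orthogonal(2)[OF \<phi>] by (simp add: ip_def)
  then show "ip (H \<Otimes>\<^sub>M dF) (\<lambda>(x, y). \<gamma> x * Lop f f' \<phi> y) (mfun mu \<psi> j) = 0" for j
    unfolding mfun_def
    using ip_tensor[OF L2set_integrable_mult[OF \<gamma> mu] L2set_integrable_mult[OF Lop_L2set_norm(1)[OF \<phi>] score_L2set]]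
    by simp
qed

lemma ip_tensor_Lop:
  assumes "sigma_finite_measure H" and \<gamma>: "\<gamma>1 \<in> L2set H" "\<gamma>2 \<in> L2set H" and \<phi>: "\<phi>1 \<in> L2set dF" "\<phi>2 \<in> L2set dF"
  shows "ip (H \<Otimes>\<^sub>M dF) (\<lambda>(x, y). \<gamma>1 x * Lop f f' \<phi>1 y) (\<lambda>(x, y). \<gamma>2 x * Lop f f' \<phi>2 y)
       = ip (H \<Otimes>\<^sub>M dF) (\<lambda>(x, y). \<gamma>1 x * \<phi>1 y) (\<lambda>(x, y). \<gamma>2 x * \<phi>2 y)"
proof -
  interpret H: sigma_finite_measure H by fact
  interpret pair_sigma_finite H dF ..
  note \<gamma>\<gamma> = L2set_integrable_mult[OF \<gamma>]
  show ?thesis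
    using ip_tensor[OF \<gamma>\<gamma> L2set_integrable_mult[OF \<phi>]] Lop_inner[OF \<phi>]
      ip_tensor[OF \<gamma>\<gamma> L2set_integrable_mult[OF Lop_L2set_norm(1)[OF \<phi>(1)] Lop_L2set_norm(1)[OF \<phi>(2)]]]
    by simp
qed

end

theorem proposition4p1:
  fixes f f' :: "real \<Rightarrow> real"
    and H :: "'a::euclidean_space measure"
    and mu :: "'a \<Rightarrow> real^'q::finite"
    and P :: "'w measure"
    and b :: "('a \<times> real \<Rightarrow> real) \<Rightarrow> 'w \<Rightarrow> real"
  assumes f_meas: "f \<in> borel_measurable borel"
    and f_nonneg: "\<forall>y. 0 \<le> f y"
    and f_int: "integrable lborel f"
    and f_one: "integral\<^sup>L lborel f = 1"
    and f_ac: "\<forall>a b. a \<le> b \<longrightarrow>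
                 set_integrable lborel {a..b} f' \<and> (LBINT x:{a..b}. f' x) = f b - f a"
    and fisher_int: "integrable (distF f) (\<lambda>y. (psi f f' y)^2)"
    and fisher_pos: "0 < (LINT y|distF f. (psi f f' y)^2)"
    and Gam0_nonsing: "invertible (LINT z|distF f. outer (hvec f f' z))"
    and Gam_nonsing: "\<forall>y. measure (distF f) {..y} < 1 \<longrightarrow> invertible (Gam f f' y)"
    and H_prob: "prob_space H"
    and H_sets: "sets H = sets borel"
    and mu_meas: "mu \<in> borel_measurable H"
    and mu_L2: "\<forall>j. integrable H (\<lambda>x. (mu x $ j)^2)"
    and mu_pd: "\<forall>v::real^'q. v \<noteq> 0 \<longrightarrow>
                  0 < v \<bullet> ((\<chi> i j. LINT x|H. mu x $ i * mu x $ j) *v v)"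
    and P_prob: "prob_space P"
    and b_gauss: "zero_mean_gaussian P (L2set (H \<Otimes>\<^sub>M distF f)) b"
    and b_lin: "\<forall>\<alpha>\<in>L2set (H \<Otimes>\<^sub>M distF f). \<forall>\<beta>\<in>L2set (H \<Otimes>\<^sub>M distF f). \<forall>c d.
                  AE \<omega> in P. b (\<lambda>z. c * \<alpha> z + d * \<beta> z) \<omega> = c * b \<alpha> \<omega> + d * b \<beta> \<omega>"
    and b_cov: "\<forall>\<alpha>1\<in>L2set (H \<Otimes>\<^sub>M distF f). \<forall>\<alpha>2\<in>L2set (H \<Otimes>\<^sub>M distF f).
                  (LINT \<omega>|P. b \<alpha>1 \<omega> * b \<alpha>2 \<omega>) = ip (H \<Otimes>\<^sub>M distF f) \<alpha>1 \<alpha>2"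
  shows "(\<forall>\<phi>\<in>L2set (distF f).
            Lop f f' \<phi> \<in> L2set (distF f)
          \<and> integrable (distF f) (\<lambda>y. Lop f f' \<phi> y *\<^sub>R hvec f f' y)
          \<and> (LINT y|distF f. Lop f f' \<phi> y *\<^sub>R hvec f f' y) = 0
          \<and> (LINT y|distF f. (Lop f f' \<phi> y)^2) = (LINT y|distF f. (\<phi> y)^2))
       \<and> (let w = (\<lambda>(\<gamma>, \<phi>) \<omega>. xi_hat (H \<Otimes>\<^sub>M distF f) (distF f) (mfun mu (psi f f')) b
                                  (\<lambda>(x, y). \<gamma> x * Lop f f' \<phi> y) \<omega>)
          in zero_mean_gaussian P (L2set H \<times> L2set (distF f)) w
           \<and> (\<forall>\<gamma>1\<in>L2set H. \<forall>\<phi>1\<in>L2set (distF f). \<forall>\<gamma>2\<in>L2set H. \<forall>\<phi>2\<in>L2set (distF f).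
                (LINT \<omega>|P. w (\<gamma>1, \<phi>1) \<omega> * w (\<gamma>2, \<phi>2) \<omega>)
                  = ip (H \<Otimes>\<^sub>M distF f) (\<lambda>(x, y). \<gamma>1 x * \<phi>1 y) (\<lambda>(x, y). \<gamma>2 x * \<phi>2 y)))"
proof -
  (* The correction terms of xi_hat vanish on the arguments gamma (x) L phi. *)
  interpret fisher_density f f'
    using f_meas f_nonneg f_int f_one f_ac fisher_int Gam_nonsing by (rule fisher_density.intro)
  interpret H: prob_space H by (rule H_prob)
  have mu_L2set: "(\<lambda>x. mu x $ j) \<in> L2set H" for j
    using measurable_compose[OF mu_meas borel_measurable_nth] mu_L2 by (simp add: L2set_def)
  define A where "A = (\<lambda>(\<gamma>, \<phi>). (\<lambda>(x, y). \<gamma> x * Lop f f' \<phi> y) :: 'a \<times> real \<Rightarrow> real)"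
  define w where "w = (\<lambda>(\<gamma>, \<phi>) \<omega>. xi_hat (H \<Otimes>\<^sub>M dF) dF (mfun mu \<psi>) b (\<lambda>(x, y). \<gamma> x * Lop f f' \<phi> y) \<omega>)"
  have A_L2: "A ` (L2set H \<times> L2set dF) \<subseteq> L2set (H \<Otimes>\<^sub>M dF)"
    using tensor_Lop_L2set[OF H.sigma_finite_measure_axioms] by (auto simp: A_def)
  have w_eq: "w i = b (A i)" if "i \<in> L2set H \<times> L2set dF" for i
    using that xi_hat_tensor_Lop[OF H.sigma_finite_measure_axioms mu_L2set] by (auto simp: w_def A_def fun_eq_iff)
  have "zero_mean_gaussian P (L2set H \<times> L2set dF) w"
    using w_eq by (rule zero_mean_gaussian_reindex[OF b_gauss A_L2])
  moreover have "(LINT \<omega>|P. w (\<gamma>1, \<phi>1) \<omega> * w (\<gamma>2, \<phi>2) \<omega>)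
      = ip (H \<Otimes>\<^sub>M dF) (\<lambda>(x, y). \<gamma>1 x * \<phi>1 y) (\<lambda>(x, y). \<gamma>2 x * \<phi>2 y)"
    if "\<gamma>1 \<in> L2set H" "\<gamma>2 \<in> L2set H" "\<phi>1 \<in> L2set dF" "\<phi>2 \<in> L2set dF" for \<gamma>1 \<phi>1 \<gamma>2 \<phi>2
  proof -
    have "(\<lambda>(x, y). \<gamma>1 x * Lop f f' \<phi>1 y) \<in> L2set (H \<Otimes>\<^sub>M dF)" "(\<lambda>(x, y). \<gamma>2 x * Lop f f' \<phi>2 y) \<in> L2set (H \<Otimes>\<^sub>M dF)"
      using tensor_Lop_L2set[OF H.sigma_finite_measure_axioms] that by auto
    then show ?thesis
      using that w_eq b_cov ip_tensor_Lop[OF H.sigma_finite_measure_axioms that] by (simp add: A_def)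
  qed
  ultimately show ?thesis
    unfolding Let_def w_def[symmetric] using Lop_L2set_norm Lop_orthogonal_hvec by blast
qed

end
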